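(* Let $\mathcal M$ be a $\Sigma$-module over a field $\mathbb F$ and $(A,f)$ an object of $\Gamma(\mathcal M)_{mod}$. For all $n\ge0$, ${\underline r}\in\mathrm{Comp}_p(n)$ and $x\in\mathcal M(n)^{\Sigma_{\underline r}}$ define $\beta_{x,{\underline r}}:A^{\times p}\to A$ by $$\beta_{x,{\underline r}}(a_1,\dots,a_p)=f\Big(\sum_{\sigma\in\Sigma_n/\Sigma_{\underline r}}\sigma\cdot x\otimes\sigma\cdot\big(a_1^{\otimes r_1}\otimes\dots\otimes a_p^{\otimes r_p}\big)\Big).$$ Then $(A,\beta)$ is an object of $\beta(\mathcal M)$ (i.e. the operations satisfy relations ($\beta$1)–($\beta$6)), and $(A,f)\mapsto(A,\beta)$, identity on morphisms, extends to a functor $F_{\mathcal M}:\Gamma(\mathcal M)_{mod}\to\beta(\mathcal M)$.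
   Context: $[n]=\{1,\dots,n\}$. A $\Sigma$-module $\mathcal M$: representations $\mathcal M(n)$ of $\Sigma_n$. $\Gamma(\mathcal M,V)=\bigoplus_{n\ge0}(\mathcal M(n)\otimes V^{\otimes n})^{\Sigma_n}$ (diagonal action, permutation of factors on $V^{\otimes n}$). $\Gamma(\mathcal M)_{mod}$: objects $(A,f)$ with $f:\Gamma(\mathcal M,A)\to A$ linear; morphisms linear $g$ with $f'\circ\Gamma(\mathcal M,g)=g\circ f$. Compositions ${\underline r}\in\mathrm{Comp}_p(n)$: nonnegative $p$-tuples with sum $n$, identified with partitions of $[n]$ into consecutive intervals ${\underline r}_i$ of lengths $r_i$; $\Sigma_{\underline r}\subseteq\Sigma_n$ preserves each ${\underline r}_i$. Sums over $G/H$ run over left coset representatives. For $\rho\in\Sigma_p$: ${\underline r}^\rho=(r_{\rho^{-1}(1)},\dots,r_{\rho^{-1}(p)})$ and $\rho^*\in\Sigma_n$ the associated block permutation with blocks of sizes $r_i$. For ${\underline q}\in\mathrm{Comp}_s(p)$: ${\underline q}\rhd{\underline r}=(\sum_{i\in{\underline q}_j}r_i)_{j\in[s]}$. ${\underline r}\circ_1(l,m)=(l,m,r_2,\dots,r_p)$. $\beta(\mathcal M)$: objects $(A,\beta)$ with $\beta_{x,{\underline r}}:A^{\times p}\to A$ for ${\underline r}\in\mathrm{Comp}_p(n)$, $x\in\mathcal M(n)^{\Sigma_{\underline r}}$ satisfying ($\beta$1) $\beta_{x,{\underline r}}(a_1,\dots,a_p)=\beta_{\rho^*\cdot x,{\underline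 r}^\rho}(a_{\rho^{-1}(1)},\dots,a_{\rho^{-1}(p)})$ for $\rho\in\Sigma_p$; ($\beta$2) $\beta_{x,(0,r_1,\dots,r_p)}(a_0,\dots,a_p)=\beta_{x,(r_1,\dots,r_p)}(a_1,\dots,a_p)$; ($\beta$3) $\beta_{x,{\underline r}}(\lambda a_1,a_2,\dots)=\lambda^{r_1}\beta_{x,{\underline r}}(a_1,a_2,\dots)$; ($\beta$4) for ${\underline q}\in\mathrm{Comp}_s(p)$, $\beta_{x,{\underline r}}$ at ($a_1$ repeated $q_1$ times, …, $a_s$ repeated $q_s$ times) equals $\beta_{\sum_{\sigma\in\Sigma_{{\underline q}\rhd{\underline r}}/\Sigma_{\underline r}}\sigma\cdot x,{\underline q}\rhd{\underline r}}(a_1,\dots,a_s)$; ($\beta$5) $\beta_{x,{\underline r}}(a_0+a_1,a_2,\dots,a_p)=\sum_{l+m=r_1}\beta_{x,{\underline r}\circ_1(l,m)}(a_0,a_1,\dots,a_p)$; ($\beta$6) $\beta_{\lambda x+y,{\underline r}}=\lambda\beta_{x,{\underline r}}+\beta_{y,{\underline r}}$. Morphisms: linear maps commuting with all operations. *)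

theory Defs
  imports Complex_Main "HOL-Library.Function_Algebras" "HOL-Combinatorics.Permutations"
begin

(* Conventions: [n] is rendered as {0..<n} (0-based); permutations are *)
(* functions nat => nat with  sigma permutes {0..<n}.  Tuples/compositions *)
(* are lists; (a_1,...,a_p) is a list of length p.                      *)

text \<open>A Sigma-module over the field 'k: the representations M(n) are subspaces
  M n of an ambient 'k-vector space 'm; act n sigma is the action of Sigma_n on M(n).\<close>
definition sigma_module ::
  "('k::field \<Rightarrow> 'm::ab_group_add \<Rightarrow> 'm) \<Rightarrow> (nat \<Rightarrow> 'm set) \<Rightarrow> (nat \<Rightarrow> (nat \<Rightarrow> nat) \<Rightarrow> 'm \<Rightarrow> 'm) \<Rightarrow> bool"
  where "sigma_module sM M act \<longleftrightarrow>
    vector_space sM \<and>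
    (\<forall>n. module.subspace sM (M n)) \<and>
    (\<forall>n \<sigma>. \<sigma> permutes {0..<n} \<longrightarrow>
        (\<forall>x\<in>M n. act n \<sigma> x \<in> M n) \<and>
        (\<forall>x\<in>M n. \<forall>y\<in>M n. act n \<sigma> (x + y) = act n \<sigma> x + act n \<sigma> y) \<and>
        (\<forall>x\<in>M n. \<forall>c. act n \<sigma> (sM c x) = sM c (act n \<sigma> x))) \<and>
    (\<forall>n. \<forall>x\<in>M n. act n id x = x) \<and>
    (\<forall>n \<sigma> \<tau>. \<sigma> permutes {0..<n} \<longrightarrow> \<tau> permutes {0..<n} \<longrightarrow>
        (\<forall>x\<in>M n. act n (\<sigma> \<circ> \<tau>) x = act n \<sigma> (act n \<tau> x)))"

definition Comp :: "nat \<Rightarrow> nat \<Rightarrow> nat list set"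
  where "Comp p n = {r. length r = p \<and> sum_list r = n}"

definition blk :: "nat list \<Rightarrow> nat \<Rightarrow> nat set"
  where "blk r i = {sum_list (take i r) ..< sum_list (take (Suc i) r)}"

definition Sym :: "nat \<Rightarrow> (nat \<Rightarrow> nat) set"
  where "Sym n = {\<sigma>. \<sigma> permutes {0..<n}}"

definition Young :: "nat list \<Rightarrow> (nat \<Rightarrow> nat) set"
  where "Young r = {\<sigma>. \<sigma> permutes {0..<sum_list r} \<and> (\<forall>i<length r. \<sigma> ` blk r i = blk r i)}"

definition Minv :: "(nat \<Rightarrow> 'm set) \<Rightarrow> (nat \<Rightarrow> (nat \<Rightarrow> nat) \<Rightarrow> 'm \<Rightarrow> 'm) \<Rightarrow> nat list \<Rightarrow> 'm set"
  where "Minv M act r = {x \<in> M (sum_list r). \<forall>\<tau>\<in>Young r. act (sum_list r) \<tau> x = x}"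

definition coset_sum :: "(nat \<Rightarrow> nat) set \<Rightarrow> (nat \<Rightarrow> nat) set \<Rightarrow> ((nat \<Rightarrow> nat) \<Rightarrow> 'b::comm_monoid_add) \<Rightarrow> 'b"
  where "coset_sum G H f = (\<Sum>C\<in>{(\<lambda>\<tau>. \<sigma> \<circ> \<tau>) ` H | \<sigma>. \<sigma> \<in> G}. f (SOME \<sigma>. \<sigma> \<in> C))"

definition comp_perm :: "(nat \<Rightarrow> nat) \<Rightarrow> 'a list \<Rightarrow> 'a list"
  where "comp_perm \<rho> r = permute_list (inv \<rho>) r"

text \<open>rho^*: the block permutation of [n] sending the i-th interval of r (order
  preservingly) onto the rho(i)-th interval of r^rho.\<close>
definition block_perm :: "nat list \<Rightarrow> (nat \<Rightarrow> nat) \<Rightarrow> nat \<Rightarrow> nat"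
  where "block_perm r \<rho> j =
    (if j < sum_list r then
       (let i = (THE i. i < length r \<and> j \<in> blk r i)
        in sum_list (take (\<rho> i) (comp_perm \<rho> r)) + (j - sum_list (take i r)))
     else j)"

definition comp_merge :: "nat list \<Rightarrow> nat list \<Rightarrow> nat list"
  where "comp_merge q r = map (\<lambda>j. \<Sum>i\<in>blk q j. r ! i) [0..<length q]"

definition rep_word :: "nat list \<Rightarrow> 'a list \<Rightarrow> 'a list"
  where "rep_word r as = concat (map (\<lambda>i. replicate (r ! i) (as ! i)) [0..<length r])"

text \<open>Free 'k-vector space on the generators (x, [a_1,...,a_n]) with x in M(n),
  standing for x (x) a_1 (x) ... (x) a_n; elements are finitely supported functions.\<close>
definition free_gen :: "'g \<Rightarrow> 'g \<Rightarrow> 'k::field"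
  where "free_gen g = (\<lambda>h. if h = g then 1 else 0)"

definition fscale :: "'k::field \<Rightarrow> ('g \<Rightarrow> 'k) \<Rightarrow> ('g \<Rightarrow> 'k)"
  where "fscale c v = (\<lambda>g. c * v g)"

definition Free :: "(nat \<Rightarrow> 'm set) \<Rightarrow> ('m \<times> 'a list \<Rightarrow> 'k::field) set"
  where "Free M = {v. finite {g. v g \<noteq> 0} \<and> (\<forall>g. v g \<noteq> 0 \<longrightarrow> fst g \<in> M (length (snd g)))}"

definition push :: "('g \<Rightarrow> 'h) \<Rightarrow> ('g \<Rightarrow> 'k::field) \<Rightarrow> ('h \<Rightarrow> 'k)"
  where "push \<phi> v = (\<lambda>h. \<Sum>g\<in>{g. v g \<noteq> 0 \<and> \<phi> g = h}. v g)"

text \<open>Multilinearity relations; the tensor product (+)_n M(n) (x) A^{(x)n} is Free M / Rel.\<close>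
definition Rel_gens ::
  "('k::field \<Rightarrow> 'm::ab_group_add \<Rightarrow> 'm) \<Rightarrow> (nat \<Rightarrow> 'm set) \<Rightarrow> ('k \<Rightarrow> 'a::ab_group_add \<Rightarrow> 'a) \<Rightarrow> ('m \<times> 'a list \<Rightarrow> 'k) set"
  where "Rel_gens sM M sA =
    {free_gen (x + y, as) - free_gen (x, as) - free_gen (y, as) | x y as.
        x \<in> M (length as) \<and> y \<in> M (length as)} \<union>
    {free_gen (sM c x, as) - fscale c (free_gen (x, as)) | c x as. x \<in> M (length as)} \<union>
    {free_gen (x, as[i := a + b]) - free_gen (x, as[i := a]) - free_gen (x, as[i := b]) | x as i a b.
        x \<in> M (length as) \<and> i < length as} \<union>
    {free_gen (x, as[i := sA c (as ! i)]) - fscale c (free_gen (x, as)) | x as i c.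
        x \<in> M (length as) \<and> i < length as}"

definition Rel ::
  "('k::field \<Rightarrow> 'm::ab_group_add \<Rightarrow> 'm) \<Rightarrow> (nat \<Rightarrow> 'm set) \<Rightarrow> ('k \<Rightarrow> 'a::ab_group_add \<Rightarrow> 'a) \<Rightarrow> ('m \<times> 'a list \<Rightarrow> 'k) set"
  where "Rel sM M sA = module.span fscale (Rel_gens sM M sA)"

definition gen_act :: "(nat \<Rightarrow> (nat \<Rightarrow> nat) \<Rightarrow> 'm \<Rightarrow> 'm) \<Rightarrow> nat \<Rightarrow> (nat \<Rightarrow> nat) \<Rightarrow> 'm \<times> 'a list \<Rightarrow> 'm \<times> 'a list"
  where "gen_act act n \<sigma> g =
    (if length (snd g) = n then (act n \<sigma> (fst g), permute_list (inv \<sigma>) (snd g)) else g)"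

text \<open>Representatives of the Sigma_n-invariant classes (degreewise); Gamma(M,A) = Inv / Rel.\<close>
definition Inv ::
  "('k::field \<Rightarrow> 'm::ab_group_add \<Rightarrow> 'm) \<Rightarrow> (nat \<Rightarrow> 'm set) \<Rightarrow> (nat \<Rightarrow> (nat \<Rightarrow> nat) \<Rightarrow> 'm \<Rightarrow> 'm) \<Rightarrow>
   ('k \<Rightarrow> 'a::ab_group_add \<Rightarrow> 'a) \<Rightarrow> ('m \<times> 'a list \<Rightarrow> 'k) set"
  where "Inv sM M act sA = {v \<in> Free M. \<forall>n \<sigma>. \<sigma> permutes {0..<n} \<longrightarrow>
                                push (gen_act act n \<sigma>) v - v \<in> Rel sM M sA}"

text \<open>Objects (A,f) of Gamma(M)_mod: f is a linear map Gamma(M,A) = Inv/Rel -> A, given by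
  a lift F that is linear on Inv and vanishes on Rel.\<close>
definition gamma_obj ::
  "('k::field \<Rightarrow> 'm::ab_group_add \<Rightarrow> 'm) \<Rightarrow> (nat \<Rightarrow> 'm set) \<Rightarrow> (nat \<Rightarrow> (nat \<Rightarrow> nat) \<Rightarrow> 'm \<Rightarrow> 'm) \<Rightarrow>
   ('k \<Rightarrow> 'a::ab_group_add \<Rightarrow> 'a) \<Rightarrow> (('m \<times> 'a list \<Rightarrow> 'k) \<Rightarrow> 'a) \<Rightarrow> bool"
  where "gamma_obj sM M act sA F \<longleftrightarrow>
    vector_space sA \<and>
    (\<forall>v\<in>Inv sM M act sA. \<forall>w\<in>Inv sM M act sA. F (v + w) = F v + F w) \<and>
    (\<forall>v\<in>Inv sM M act sA. \<forall>c. F (fscale c v) = sA c (F v)) \<and>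
    (\<forall>v\<in>Rel sM M sA. F v = 0)"

definition gamma_map :: "('a \<Rightarrow> 'b) \<Rightarrow> ('m \<times> 'a list \<Rightarrow> 'k::field) \<Rightarrow> ('m \<times> 'b list \<Rightarrow> 'k)"
  where "gamma_map g v = push (\<lambda>(x, as). (x, map g as)) v"

definition gamma_mor ::
  "('k::field \<Rightarrow> 'm::ab_group_add \<Rightarrow> 'm) \<Rightarrow> (nat \<Rightarrow> 'm set) \<Rightarrow> (nat \<Rightarrow> (nat \<Rightarrow> nat) \<Rightarrow> 'm \<Rightarrow> 'm) \<Rightarrow>
   ('k \<Rightarrow> 'a::ab_group_add \<Rightarrow> 'a) \<Rightarrow> (('m \<times> 'a list \<Rightarrow> 'k) \<Rightarrow> 'a) \<Rightarrow>
   ('k \<Rightarrow> 'b::ab_group_add \<Rightarrow> 'b) \<Rightarrow> (('m \<times> 'b list \<Rightarrow> 'k) \<Rightarrow> 'b) \<Rightarrow> ('a \<Rightarrow> 'b) \<Rightarrow> bool"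
  where "gamma_mor sM M act sA F sB F' g \<longleftrightarrow>
    Vector_Spaces.linear sA sB g \<and> (\<forall>v\<in>Inv sM M act sA. F' (gamma_map g v) = g (F v))"

definition beta_of ::
  "(nat \<Rightarrow> (nat \<Rightarrow> nat) \<Rightarrow> 'm \<Rightarrow> 'm) \<Rightarrow> (('m \<times> 'a list \<Rightarrow> 'k::field) \<Rightarrow> 'a) \<Rightarrow> 'm \<Rightarrow> nat list \<Rightarrow> 'a list \<Rightarrow> 'a"
  where "beta_of act F x r as =
    F (coset_sum (Sym (sum_list r)) (Young r)
        (\<lambda>\<sigma>. free_gen (act (sum_list r) \<sigma> x, permute_list (inv \<sigma>) (rep_word r as))))"

definition beta_obj ::
  "('k::field \<Rightarrow> 'm::ab_group_add \<Rightarrow> 'm) \<Rightarrow> (nat \<Rightarrow> 'm set) \<Rightarrow> (nat \<Rightarrow> (nat \<Rightarrow> nat) \<Rightarrow> 'm \<Rightarrow> 'm) \<Rightarrow>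
   ('k \<Rightarrow> 'a::ab_group_add \<Rightarrow> 'a) \<Rightarrow> ('m \<Rightarrow> nat list \<Rightarrow> 'a list \<Rightarrow> 'a) \<Rightarrow> bool"
  where "beta_obj sM M act sA \<beta> \<longleftrightarrow>
    vector_space sA \<and>
    \<comment> \<open>(beta1)\<close>
    (\<forall>r x as \<rho>. x \<in> Minv M act r \<longrightarrow> length as = length r \<longrightarrow> \<rho> permutes {0..<length r} \<longrightarrow>
       \<beta> x r as = \<beta> (act (sum_list r) (block_perm r \<rho>) x) (comp_perm \<rho> r) (comp_perm \<rho> as)) \<and>
    \<comment> \<open>(beta2)\<close>
    (\<forall>r x a0 as. x \<in> Minv M act (0 # r) \<longrightarrow> length as = length r \<longrightarrow>
       \<beta> x (0 # r) (a0 # as) = \<beta> x r as) \<and>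
    \<comment> \<open>(beta3)\<close>
    (\<forall>r1 r x c a1 as. x \<in> Minv M act (r1 # r) \<longrightarrow> length as = length r \<longrightarrow>
       \<beta> x (r1 # r) (sA c a1 # as) = sA (c ^ r1) (\<beta> x (r1 # r) (a1 # as))) \<and>
    \<comment> \<open>(beta4)\<close>
    (\<forall>r q x as. x \<in> Minv M act r \<longrightarrow> q \<in> Comp (length as) (length r) \<longrightarrow>
       \<beta> x r (rep_word q as) =
       \<beta> (coset_sum (Young (comp_merge q r)) (Young r) (\<lambda>\<sigma>. act (sum_list r) \<sigma> x))
         (comp_merge q r) as) \<and>
    \<comment> \<open>(beta5)\<close>
    (\<forall>r1 r x a0 a1 as. x \<in> Minv M act (r1 # r) \<longrightarrow> length as = length r \<longrightarrow>
       \<beta> x (r1 # r) ((a0 + a1) # as) =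
       (\<Sum>l\<in>{0..r1}. \<beta> x (l # (r1 - l) # r) (a0 # a1 # as))) \<and>
    \<comment> \<open>(beta6)\<close>
    (\<forall>r x y c as. x \<in> Minv M act r \<longrightarrow> y \<in> Minv M act r \<longrightarrow> length as = length r \<longrightarrow>
       \<beta> (sM c x + y) r as = sA c (\<beta> x r as) + \<beta> y r as)"

definition beta_mor ::
  "('k::field \<Rightarrow> 'm::ab_group_add \<Rightarrow> 'm) \<Rightarrow> (nat \<Rightarrow> 'm set) \<Rightarrow> (nat \<Rightarrow> (nat \<Rightarrow> nat) \<Rightarrow> 'm \<Rightarrow> 'm) \<Rightarrow>
   ('k \<Rightarrow> 'a::ab_group_add \<Rightarrow> 'a) \<Rightarrow> ('m \<Rightarrow> nat list \<Rightarrow> 'a list \<Rightarrow> 'a) \<Rightarrow>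
   ('k \<Rightarrow> 'b::ab_group_add \<Rightarrow> 'b) \<Rightarrow> ('m \<Rightarrow> nat list \<Rightarrow> 'b list \<Rightarrow> 'b) \<Rightarrow> ('a \<Rightarrow> 'b) \<Rightarrow> bool"
  where "beta_mor sM M act sA \<beta> sB \<beta>' g \<longleftrightarrow>
    Vector_Spaces.linear sA sB g \<and>
    (\<forall>r x as. x \<in> Minv M act r \<longrightarrow> length as = length r \<longrightarrow> g (\<beta> x r as) = \<beta>' x r (map g as))"

end

theory Submission
  imports Defs
begin

text \<open>The value beta_{x,r}(a) is f applied to the Sigma_n-invariant tensor
  B(x,r,a) = sum over sigma in Sigma_n/Sigma_r of sigma x (x) sigma (a_1^(r_1) (x) ... (x) a_p^(r_p)),
  so every relation (beta1)-(beta6) follows from an identity between such tensors modulo the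
  multilinearity relations of the tensor product. (beta3) and (beta6) are multilinearity itself.
  (beta1) reindexes the cosets by the block permutation rho^*, which conjugates Sigma_r onto
  Sigma_(r^rho). (beta4) and (beta5) split the coset sum along a tower of Young subgroups; for
  (beta5) one first expands (a_0 + a_1)^(r_1) multilinearly, and the terms with l factors a_0
  correspond exactly to the cosets of Sigma_(l, r_1 - l, r_2, ...) in Sigma_r. Functoriality holds
  because Gamma(M,g) sends B(x,r,a) to B(x,r,g a).\<close>

section \<open>Left cosets in finite permutation groups\<close>

definition perm_group :: "(nat \<Rightarrow> nat) set \<Rightarrow> bool" where
  "perm_group G \<longleftrightarrow> finite G \<and> id \<in> G \<and> (\<forall>\<sigma>\<in>G. \<forall>\<tau>\<in>G. \<sigma> \<circ> \<tau> \<in> G) \<and> (\<forall>\<sigma>\<in>G. bij \<sigma> \<and> inv \<sigma> \<in> G)"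

definition lcoset :: "(nat \<Rightarrow> nat) \<Rightarrow> (nat \<Rightarrow> nat) set \<Rightarrow> (nat \<Rightarrow> nat) set" where
  "lcoset \<sigma> H = (\<lambda>\<tau>. \<sigma> \<circ> \<tau>) ` H"

definition lcosets :: "(nat \<Rightarrow> nat) set \<Rightarrow> (nat \<Rightarrow> nat) set \<Rightarrow> (nat \<Rightarrow> nat) set set" where
  "lcosets G H = {lcoset \<sigma> H | \<sigma>. \<sigma> \<in> G}"

definition coset_rep :: "(nat \<Rightarrow> nat) set \<Rightarrow> nat \<Rightarrow> nat" where
  "coset_rep C = (SOME \<sigma>. \<sigma> \<in> C)"

definition right_invariant :: "(nat \<Rightarrow> nat) set \<Rightarrow> (nat \<Rightarrow> nat) set \<Rightarrow> ((nat \<Rightarrow> nat) \<Rightarrow> 'b) \<Rightarrow> bool" where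
  "right_invariant G H f \<longleftrightarrow> (\<forall>\<sigma>\<in>G. \<forall>\<tau>\<in>H. f (\<sigma> \<circ> \<tau>) = f \<sigma>)"

lemma coset_sum_eq: "coset_sum G H f = (\<Sum>C\<in>lcosets G H. f (coset_rep C))"
  unfolding coset_sum_def lcosets_def lcoset_def coset_rep_def by simp

lemma perm_groupD:
  assumes "perm_group G"
  shows "finite G" "id \<in> G" "\<And>\<sigma> \<tau>. \<sigma>\<in>G \<Longrightarrow> \<tau>\<in>G \<Longrightarrow> \<sigma> \<circ> \<tau> \<in> G"
    "\<And>\<sigma>. \<sigma>\<in>G \<Longrightarrow> bij \<sigma>" "\<And>\<sigma>. \<sigma>\<in>G \<Longrightarrow> inv \<sigma> \<in> G"
  using assms unfolding perm_group_def by auto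

lemma bij_inv_comp: "bij \<sigma> \<Longrightarrow> inv \<sigma> \<circ> \<sigma> = id"
  by (simp add: bij_is_inj)

lemma bij_comp_inv: "bij \<sigma> \<Longrightarrow> \<sigma> \<circ> inv \<sigma> = id"
  using bij_is_surj surj_iff by blast

lemma lcoset_self: "perm_group H \<Longrightarrow> \<sigma> \<in> lcoset \<sigma> H"
  unfolding lcoset_def using perm_groupD(2)[of H] by (metis comp_id image_eqI)

lemma lcoset_lcoset: "lcoset \<sigma> (lcoset \<tau> H) = lcoset (\<sigma> \<circ> \<tau>) H"
  unfolding lcoset_def image_image by (simp add: comp_assoc)

lemma lcosetI: "\<tau> \<in> H \<Longrightarrow> \<sigma> \<circ> \<tau> \<in> lcoset \<sigma> H"
  unfolding lcoset_def by auto

lemma lcoset_id: "lcoset id C = C"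
  unfolding lcoset_def by simp

lemma lcoset_eq:
  assumes H: "perm_group H" and "\<sigma>' \<in> lcoset \<sigma> H"
  shows "lcoset \<sigma>' H = lcoset \<sigma> H"
proof -
  obtain h where h: "h \<in> H" "\<sigma>' = \<sigma> \<circ> h" using assms(2) unfolding lcoset_def by auto
  have "lcoset h H = H"
  proof
    show "lcoset h H \<subseteq> H" unfolding lcoset_def using perm_groupD(3)[OF H] h by auto
    show "H \<subseteq> lcoset h H"
    proof
      fix t assume t: "t \<in> H"
      have "t = h \<circ> (inv h \<circ> t)" using bij_comp_inv[OF perm_groupD(4)[OF H h(1)]] by (metis comp_assoc id_comp)
      moreover have "inv h \<circ> t \<in> H" using perm_groupD(3,5)[OF H] h t by auto
      ultimately show "t \<in> lcoset h H" unfolding lcoset_def by blast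
    qed
  qed
  then show ?thesis using h by (metis lcoset_lcoset)
qed

lemma lcoset_eq_iff:
  assumes H: "perm_group H" and "bij \<sigma>"
  shows "lcoset \<sigma> H = lcoset \<sigma>' H \<longleftrightarrow> inv \<sigma> \<circ> \<sigma>' \<in> H"
proof
  assume "lcoset \<sigma> H = lcoset \<sigma>' H"
  then have "\<sigma>' \<in> lcoset \<sigma> H" using lcoset_self[OF H] by metis
  then obtain h where "h \<in> H" "\<sigma>' = \<sigma> \<circ> h" unfolding lcoset_def by auto
  then show "inv \<sigma> \<circ> \<sigma>' \<in> H" using bij_inv_comp[OF assms(2)] by (simp add: comp_assoc[symmetric])
next
  assume a: "inv \<sigma> \<circ> \<sigma>' \<in> H"
  have "\<sigma>' = \<sigma> \<circ> (inv \<sigma> \<circ> \<sigma>')" using bij_comp_inv[OF assms(2)] by (metis comp_assoc id_comp)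
  then have "\<sigma>' \<in> lcoset \<sigma> H" using lcosetI[OF a] by metis
  then show "lcoset \<sigma> H = lcoset \<sigma>' H" using lcoset_eq[OF H] by metis
qed

lemma lcoset_in_lcosets: "\<sigma> \<in> G \<Longrightarrow> lcoset \<sigma> H \<in> lcosets G H"
  unfolding lcosets_def by auto

lemma finite_lcosets: "perm_group G \<Longrightarrow> finite (lcosets G H)"
  unfolding lcosets_def using perm_groupD(1) by (simp add: setcompr_eq_image)

lemma coset_rep_in:
  assumes "perm_group H" "C \<in> lcosets G H"
  shows "coset_rep C \<in> C"
proof -
  obtain \<sigma> where "C = lcoset \<sigma> H" using assms(2) unfolding lcosets_def by auto
  then have "\<sigma> \<in> C" using lcoset_self[OF assms(1)] by auto
  then show ?thesis unfolding coset_rep_def by (metis some_eq_imp)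
qed

lemma lcoset_coset_rep:
  assumes "perm_group H" "C \<in> lcosets G H"
  shows "C = lcoset (coset_rep C) H"
proof -
  obtain \<sigma> where "C = lcoset \<sigma> H" using assms(2) unfolding lcosets_def by auto
  then show ?thesis using lcoset_eq[OF assms(1)] coset_rep_in[OF assms] by metis
qed

lemma coset_rep_in_group:
  assumes "perm_group G" "perm_group H" "H \<subseteq> G" "C \<in> lcosets G H"
  shows "coset_rep C \<in> G"
proof -
  have "C \<subseteq> G" using assms perm_groupD(3)[OF assms(1)] unfolding lcosets_def lcoset_def by auto
  then show ?thesis using coset_rep_in[OF assms(2,4)] by blast
qed

lemma right_invariant_coset_rep:
  assumes "perm_group H" "right_invariant G H f" "C \<in> lcosets G H" "\<sigma> \<in> C" "coset_rep C \<in> G"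
  shows "f \<sigma> = f (coset_rep C)"
proof -
  have "C = lcoset (coset_rep C) H" using lcoset_coset_rep assms by auto
  then obtain h where "h \<in> H" "\<sigma> = coset_rep C \<circ> h" using assms(4) unfolding lcoset_def by auto
  then show ?thesis using assms(2,5) unfolding right_invariant_def by auto
qed

lemma coset_sum_reindex:
  assumes G: "perm_group G" and H: "perm_group H" "H \<subseteq> G" and f: "right_invariant G H f"
    and bij: "bij_betw \<Phi> (lcosets G H') (lcosets G H)"
    and g: "\<And>C. C \<in> lcosets G H' \<Longrightarrow> g (coset_rep C) \<in> \<Phi> C"
  shows "coset_sum G H' (\<lambda>\<sigma>. f (g \<sigma>)) = coset_sum G H f"
proof -
  have "(\<Sum>C\<in>lcosets G H'. f (coset_rep (\<Phi> C))) = (\<Sum>C\<in>lcosets G H. f (coset_rep C))"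
    by (rule sum.reindex_bij_betw[OF bij])
  moreover have "(\<Sum>C\<in>lcosets G H'. f (coset_rep (\<Phi> C))) = (\<Sum>C\<in>lcosets G H'. f (g (coset_rep C)))"
  proof (rule sum.cong[OF refl])
    fix C assume C: "C \<in> lcosets G H'"
    have PC: "\<Phi> C \<in> lcosets G H" using bij_betw_apply[OF bij C] .
    show "f (coset_rep (\<Phi> C)) = f (g (coset_rep C))"
      using right_invariant_coset_rep[OF H(1) f PC g[OF C] coset_rep_in_group[OF G H PC]] by (rule sym)
  qed
  ultimately show ?thesis unfolding coset_sum_eq by simp
qed

lemma lcoset_lcosets_closed:
  assumes G: "perm_group G" and C: "C \<in> lcosets G H" and \<tau>: "\<tau> \<in> G"
  shows "lcoset \<tau> C \<in> lcosets G H"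
proof -
  obtain \<sigma> where s: "\<sigma> \<in> G" "C = lcoset \<sigma> H" using C unfolding lcosets_def by auto
  then have "lcoset \<tau> C = lcoset (\<tau> \<circ> \<sigma>) H" by (simp add: lcoset_lcoset)
  moreover have "\<tau> \<circ> \<sigma> \<in> G" using perm_groupD(3)[OF G \<tau> s(1)] .
  ultimately show ?thesis using lcoset_in_lcosets by metis
qed

lemma coset_sum_left_translate:
  assumes G: "perm_group G" and H: "perm_group H" "H \<subseteq> G" and f: "right_invariant G H f" and \<pi>: "\<pi> \<in> G"
  shows "coset_sum G H (\<lambda>\<sigma>. f (\<pi> \<circ> \<sigma>)) = coset_sum G H f"
proof (rule coset_sum_reindex[OF G H f])
  have ip: "inv \<pi> \<in> G" "bij \<pi>" using perm_groupD(4,5)[OF G \<pi>] by auto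
  show "bij_betw (lcoset \<pi>) (lcosets G H) (lcosets G H)"
  proof (rule bij_betw_byWitness[where f'="lcoset (inv \<pi>)"])
    show "\<forall>a\<in>lcosets G H. lcoset (inv \<pi>) (lcoset \<pi> a) = a"
      by (simp add: lcoset_lcoset bij_inv_comp[OF ip(2)] lcoset_id)
    show "\<forall>a\<in>lcosets G H. lcoset \<pi> (lcoset (inv \<pi>) a) = a"
      by (simp add: lcoset_lcoset bij_comp_inv[OF ip(2)] lcoset_id)
    show "lcoset \<pi> ` lcosets G H \<subseteq> lcosets G H" using lcoset_lcosets_closed[OF G _ \<pi>] by auto
    show "lcoset (inv \<pi>) ` lcosets G H \<subseteq> lcosets G H" using lcoset_lcosets_closed[OF G _ ip(1)] by auto
  qed
  fix C assume "C \<in> lcosets G H"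
  then have "coset_rep C \<in> C" using coset_rep_in[OF H(1)] by auto
  then show "\<pi> \<circ> coset_rep C \<in> lcoset \<pi> C" unfolding lcoset_def by auto
qed

lemma lcoset_product_inj:
  assumes G: "perm_group G" and H: "perm_group H" "H \<subseteq> G" and K: "perm_group K" "K \<subseteq> H"
    and E: "E \<in> lcosets G H" "E' \<in> lcosets G H" and D: "D \<in> lcosets H K" "D' \<in> lcosets H K"
    and eq: "lcoset (coset_rep E \<circ> coset_rep D) K = lcoset (coset_rep E' \<circ> coset_rep D') K"
  shows "E = E'" "D = D'"
proof -
  define e e' d d' where "e = coset_rep E" "e' = coset_rep E'" "d = coset_rep D" "d' = coset_rep D'"
  have inH: "d \<in> H" "d' \<in> H" using coset_rep_in_group[OF H(1) K] D unfolding e_e'_d_d'_def by auto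
  have bij: "bij e" "bij e'" "bij d" "bij d'"
    using coset_rep_in_group[OF G H] E inH perm_groupD(4)[OF G] perm_groupD(4)[OF H(1)]
    unfolding e_e'_d_d'_def by auto
  have "inv (e \<circ> d) \<circ> (e' \<circ> d') \<in> K"
    using eq lcoset_eq_iff[OF K(1) bij_comp[OF bij(3,1)]] unfolding e_e'_d_d'_def by simp
  moreover have split: "inv (e \<circ> d) \<circ> (e' \<circ> d') = inv d \<circ> (inv e \<circ> e') \<circ> d'"
    using bij by (simp add: o_inv_distrib comp_assoc)
  ultimately have k: "inv d \<circ> (inv e \<circ> e') \<circ> d' \<in> K" by simp
  have "d \<circ> (inv d \<circ> (inv e \<circ> e') \<circ> d') \<circ> inv d' = inv e \<circ> e'"
    using bij(3,4) by (simp add: fun_eq_iff bij_is_surj surj_f_inv_f)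
  moreover have "d \<circ> (inv d \<circ> (inv e \<circ> e') \<circ> d') \<circ> inv d' \<in> H"
    using perm_groupD(3,5)[OF H(1)] inH k K(2) by blast
  ultimately have "lcoset e H = lcoset e' H" using lcoset_eq_iff[OF H(1) bij(1)] by simp
  then show EE: "E = E'" using lcoset_coset_rep[OF H(1)] E unfolding e_e'_d_d'_def by metis
  have "inv d \<circ> d' \<in> K" using k bij_inv_comp[OF bij(2)] EE unfolding e_e'_d_d'_def by simp
  then have "lcoset d K = lcoset d' K" using lcoset_eq_iff[OF K(1) bij(3)] by simp
  then show "D = D'" using lcoset_coset_rep[OF K(1)] D unfolding e_e'_d_d'_def by metis
qed

lemma bij_betw_lcoset_pairs:
  assumes G: "perm_group G" and H: "perm_group H" "H \<subseteq> G" and K: "perm_group K" "K \<subseteq> H"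
  shows "bij_betw (\<lambda>(E, D). lcoset (coset_rep E \<circ> coset_rep D) K)
           (lcosets G H \<times> lcosets H K) (lcosets G K)"
proof (rule bij_betwI')
  fix p p' assume "p \<in> lcosets G H \<times> lcosets H K" "p' \<in> lcosets G H \<times> lcosets H K"
  then obtain E D E' D' where p: "p = (E, D)" "E \<in> lcosets G H" "D \<in> lcosets H K"
    and p': "p' = (E', D')" "E' \<in> lcosets G H" "D' \<in> lcosets H K" by blast
  show "((\<lambda>(E, D). lcoset (coset_rep E \<circ> coset_rep D) K) p =
              (\<lambda>(E, D). lcoset (coset_rep E \<circ> coset_rep D) K) p') = (p = p')"
  proof
    assume "(\<lambda>(E, D). lcoset (coset_rep E \<circ> coset_rep D) K) p =
            (\<lambda>(E, D). lcoset (coset_rep E \<circ> coset_rep D) K) p'"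
    then show "p = p'" using lcoset_product_inj[OF G H K p(2) p'(2) p(3) p'(3)] p p' by simp
  qed simp
next
  fix p assume "p \<in> lcosets G H \<times> lcosets H K"
  then obtain E D where ED: "p = (E, D)" "E \<in> lcosets G H" "D \<in> lcosets H K" by auto
  have "coset_rep E \<circ> coset_rep D \<in> G"
    using perm_groupD(3)[OF G] coset_rep_in_group[OF G H ED(2)] coset_rep_in_group[OF H(1) K ED(3)] H(2)
    by blast
  then show "(\<lambda>(E, D). lcoset (coset_rep E \<circ> coset_rep D) K) p \<in> lcosets G K"
    using ED lcoset_in_lcosets by simp
next
  fix C assume "C \<in> lcosets G K"
  then obtain \<sigma> where \<sigma>: "\<sigma> \<in> G" "C = lcoset \<sigma> K" unfolding lcosets_def by auto
  define E where "E = lcoset \<sigma> H"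
  have E: "E \<in> lcosets G H" using \<sigma> E_def lcoset_in_lcosets by auto
  have e: "coset_rep E \<in> G" "bij (coset_rep E)" using coset_rep_in_group[OF G H E] perm_groupD(4)[OF G] by auto
  have "lcoset (coset_rep E) H = lcoset \<sigma> H" using lcoset_coset_rep[OF H(1) E] E_def by simp
  then have h: "inv (coset_rep E) \<circ> \<sigma> \<in> H" using lcoset_eq_iff[OF H(1) e(2)] by simp
  define D where "D = lcoset (inv (coset_rep E) \<circ> \<sigma>) K"
  have D: "D \<in> lcosets H K" using h D_def lcoset_in_lcosets by auto
  have "lcoset (coset_rep E \<circ> coset_rep D) K = lcoset (coset_rep E) D"
    unfolding lcoset_lcoset[symmetric] by (rule arg_cong[OF lcoset_coset_rep[OF K(1) D, symmetric]])
  also have "\<dots> = lcoset ((coset_rep E \<circ> inv (coset_rep E)) \<circ> \<sigma>) K"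
    unfolding D_def by (simp add: lcoset_lcoset comp_assoc)
  also have "\<dots> = C" using bij_comp_inv[OF e(2)] \<sigma>(2) by simp
  finally show "\<exists>p\<in>lcosets G H \<times> lcosets H K. C = (\<lambda>(E, D). lcoset (coset_rep E \<circ> coset_rep D) K) p"
    using E D by force
qed

lemma coset_sum_tower:
  assumes G: "perm_group G" and H: "perm_group H" "H \<subseteq> G" and K: "perm_group K" "K \<subseteq> H"
    and f: "right_invariant G K f"
  shows "coset_sum G K f = coset_sum G H (\<lambda>\<sigma>. coset_sum H K (\<lambda>\<tau>. f (\<sigma> \<circ> \<tau>)))"
proof -
  have KG: "K \<subseteq> G" using H(2) K(2) by blast
  let ?\<Phi> = "\<lambda>(E, D). lcoset (coset_rep E \<circ> coset_rep D) K"
  have bij: "bij_betw ?\<Phi> (lcosets G H \<times> lcosets H K) (lcosets G K)"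
    by (rule bij_betw_lcoset_pairs[OF G H K])
  have "coset_sum G K f = (\<Sum>p\<in>lcosets G H \<times> lcosets H K. f (coset_rep (?\<Phi> p)))"
    unfolding coset_sum_eq using sum.reindex_bij_betw[OF bij, of "\<lambda>C. f (coset_rep C)"] by simp
  also have "\<dots> = (\<Sum>(E, D)\<in>lcosets G H \<times> lcosets H K. f (coset_rep E \<circ> coset_rep D))"
  proof (rule sum.cong[OF refl])
    fix p assume p: "p \<in> lcosets G H \<times> lcosets H K"
    then obtain E D where ED: "p = (E, D)" by blast
    have C: "?\<Phi> p \<in> lcosets G K" using bij_betw_apply[OF bij p] .
    have "coset_rep E \<circ> coset_rep D \<in> ?\<Phi> p" using ED lcoset_self[OF K(1)] by simp
    then show "f (coset_rep (?\<Phi> p)) = (\<lambda>(E, D). f (coset_rep E \<circ> coset_rep D)) p"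
      using right_invariant_coset_rep[OF K(1) f C _ coset_rep_in_group[OF G K(1) KG C]] ED by simp
  qed
  also have "\<dots> = coset_sum G H (\<lambda>\<sigma>. coset_sum H K (\<lambda>\<tau>. f (\<sigma> \<circ> \<tau>)))"
    unfolding coset_sum_eq by (simp add: sum.cartesian_product case_prod_beta)
  finally show ?thesis .
qed

section \<open>Finitely supported functions\<close>

definition fsupp :: "('g \<Rightarrow> 'k::zero) \<Rightarrow> 'g set" where "fsupp v = {g. v g \<noteq> 0}"

lemma module_fscale: "module (fscale :: 'k::field \<Rightarrow> ('g \<Rightarrow> 'k) \<Rightarrow> _)"
  by unfold_locales (auto simp: fscale_def algebra_simps fun_eq_iff)

lemma fsupp_free_gen[simp]: "fsupp (free_gen g :: _ \<Rightarrow> 'k::field) = {g}"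
  by (auto simp: fsupp_def free_gen_def)

lemma fsupp_add: "fsupp ((v::_\<Rightarrow>'k::field) + w) \<subseteq> fsupp v \<union> fsupp w" by (auto simp: fsupp_def)

lemma fsupp_diff: "fsupp ((v::_\<Rightarrow>'k::field) - w) \<subseteq> fsupp v \<union> fsupp w" by (auto simp: fsupp_def)

lemma fsupp_scale: "fsupp (fscale c (v::_ \<Rightarrow> 'k::field)) \<subseteq> fsupp v" by (auto simp: fsupp_def fscale_def)

lemma fsupp_zero[simp]: "fsupp 0 = {}" by (auto simp: fsupp_def)

lemma finite_fsupp_add: "finite (fsupp (v::_\<Rightarrow>'k::field)) \<Longrightarrow> finite (fsupp w) \<Longrightarrow> finite (fsupp (v + w))"
  using fsupp_add finite_subset by (metis finite_Un)

lemma finite_fsupp_diff: "finite (fsupp (v::_\<Rightarrow>'k::field)) \<Longrightarrow> finite (fsupp w) \<Longrightarrow> finite (fsupp (v - w))"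
  using fsupp_diff finite_subset by (metis finite_Un)

lemma finite_fsupp_fscale: "finite (fsupp (v::_ \<Rightarrow> 'k::field)) \<Longrightarrow> finite (fsupp (fscale c v))"
  using fsupp_scale finite_subset by metis

lemma finite_fsupp_sum: "finite I \<Longrightarrow> (\<And>i. i \<in> I \<Longrightarrow> finite (fsupp (f i :: _ \<Rightarrow> 'k::field)))
    \<Longrightarrow> finite (fsupp (\<Sum>i\<in>I. f i))"
  by (induction I rule: finite_induct) (auto intro: finite_fsupp_add)

lemma push_eq_sum:
  assumes "finite T" "fsupp v \<subseteq> T"
  shows "push \<phi> v h = (\<Sum>g\<in>{g\<in>T. \<phi> g = h}. v g)"
  unfolding push_def
  by (rule sum.mono_neutral_left) (use assms in \<open>auto simp: fsupp_def\<close>)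

lemma push_free_gen: "push \<phi> (free_gen g :: _ \<Rightarrow> 'k::field) = free_gen (\<phi> g)"
proof
  fix h
  have "{g'. free_gen g g' \<noteq> (0::'k) \<and> \<phi> g' = h} = (if \<phi> g = h then {g} else {})"
    by (auto simp: free_gen_def)
  then show "push \<phi> (free_gen g :: _ \<Rightarrow> 'k) h = free_gen (\<phi> g) h"
    unfolding push_def by (auto simp: free_gen_def)
qed

lemma push_add:
  assumes "finite (fsupp v)" "finite (fsupp w)"
  shows "push \<phi> (v + w) = push \<phi> v + push \<phi> (w :: _ \<Rightarrow> 'k::field)"
proof
  fix h
  define T where "T = fsupp v \<union> fsupp w"
  have T: "finite T" "fsupp v \<subseteq> T" "fsupp w \<subseteq> T" "fsupp (v + w) \<subseteq> T"
    using assms fsupp_add[of v w] unfolding T_def by auto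
  have "push \<phi> (v + w) h = (\<Sum>g\<in>{g\<in>T. \<phi> g = h}. (v + w) g)" by (rule push_eq_sum[OF T(1,4)])
  also have "\<dots> = (\<Sum>g\<in>{g\<in>T. \<phi> g = h}. v g) + (\<Sum>g\<in>{g\<in>T. \<phi> g = h}. w g)"
    by (simp add: sum.distrib)
  also have "\<dots> = push \<phi> v h + push \<phi> w h"
    by (simp only: push_eq_sum[OF T(1,2)] push_eq_sum[OF T(1,3)])
  finally show "push \<phi> (v + w) h = (push \<phi> v + push \<phi> w) h" by simp
qed

lemma push_diff:
  assumes "finite (fsupp v)" "finite (fsupp w)"
  shows "push \<phi> (v - w) = push \<phi> v - push \<phi> (w :: _ \<Rightarrow> 'k::field)"
proof
  fix h
  define T where "T = fsupp v \<union> fsupp w"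
  have T: "finite T" "fsupp v \<subseteq> T" "fsupp w \<subseteq> T" "fsupp (v - w) \<subseteq> T"
    using assms fsupp_diff[of v w] unfolding T_def by auto
  have "push \<phi> (v - w) h = (\<Sum>g\<in>{g\<in>T. \<phi> g = h}. (v - w) g)" by (rule push_eq_sum[OF T(1,4)])
  also have "\<dots> = (\<Sum>g\<in>{g\<in>T. \<phi> g = h}. v g) - (\<Sum>g\<in>{g\<in>T. \<phi> g = h}. w g)"
    by (simp add: sum_subtractf)
  also have "\<dots> = push \<phi> v h - push \<phi> w h"
    by (simp only: push_eq_sum[OF T(1,2)] push_eq_sum[OF T(1,3)])
  finally show "push \<phi> (v - w) h = (push \<phi> v - push \<phi> w) h" by simp
qed

lemma push_scale: "push \<phi> (fscale c v) = fscale c (push \<phi> (v :: _ \<Rightarrow> 'k::field))"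
proof (cases "c = 0")
  case True then show ?thesis by (simp add: push_def fscale_def fun_eq_iff)
next
  case False then show ?thesis
    by (simp add: push_def fscale_def fun_eq_iff sum_distrib_left)
qed

lemma push_zero[simp]: "push \<phi> (0 :: _ \<Rightarrow> 'k::field) = 0"
  by (simp add: push_def fun_eq_iff)

lemma push_sum:
  assumes "finite I" "\<And>i. i \<in> I \<Longrightarrow> finite (fsupp (f i))"
  shows "push \<phi> (\<Sum>i\<in>I. f i) = (\<Sum>i\<in>I. push \<phi> (f i :: _ \<Rightarrow> 'k::field))"
  using assms
proof (induction I rule: finite_induct)
  case (insert i I)
  have "push \<phi> (sum f (insert i I)) = push \<phi> (f i + sum f I)" using insert(1,2) by simp
  also have "\<dots> = push \<phi> (f i) + push \<phi> (sum f I)"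
    by (rule push_add) (use insert finite_fsupp_sum[of I f] in auto)
  also have "\<dots> = (\<Sum>i\<in>insert i I. push \<phi> (f i))" using insert by simp
  finally show ?case .
qed simp

interpretation free: module "fscale :: 'k::field \<Rightarrow> ('g \<Rightarrow> 'k) \<Rightarrow> ('g \<Rightarrow> 'k)"
  by (rule module_fscale)

lemma push_span:
  assumes v: "v \<in> free.span S"
    and S: "\<And>u. u \<in> S \<Longrightarrow> finite (fsupp u) \<and> push \<phi> u \<in> free.span S"
  shows "push \<phi> (v :: _ \<Rightarrow> 'k::field) \<in> free.span S"
proof -
  have "finite (fsupp v) \<and> push \<phi> v \<in> free.span S"
    using v
  proof (induction rule: free.span_induct_alt)
    case base
    show ?case by (simp only: push_zero fsupp_zero finite.emptyI free.span_zero simp_thms)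
  next
    case (step c u w)
    have fin: "finite (fsupp (fscale c u))" "finite (fsupp w)"
      using S[OF step(1)] step(2) finite_fsupp_fscale by auto
    have "push \<phi> (fscale c u + w) \<in> free.span S"
      unfolding push_add[OF fin] push_scale using S[OF step(1)] step(2)
      by (blast intro: free.span_add free.span_scale)
    then show ?case using finite_fsupp_add[OF fin] by blast
  qed
  then show ?thesis ..
qed

lemma bij_image_mem_iff: "bij \<sigma> \<Longrightarrow> j \<in> \<sigma> ` A \<longleftrightarrow> inv \<sigma> j \<in> A"
  by (metis bij_inv_eq_iff image_iff)

lemma permutes_less: "(\<sigma>::nat\<Rightarrow>nat) permutes {0..<n} \<Longrightarrow> i < n \<Longrightarrow> \<sigma> i < n"
  using permutes_in_image by fastforce

lemma permute_list_update:
  assumes \<sigma>: "\<sigma> permutes {0..<length as}" and i: "i < length as"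
  shows "permute_list (inv \<sigma>) (as[i := v]) = (permute_list (inv \<sigma>) as)[\<sigma> i := v]"
proof (rule nth_equalityI)
  show "length (permute_list (inv \<sigma>) (as[i := v])) = length ((permute_list (inv \<sigma>) as)[\<sigma> i := v])" by simp
  fix k assume k: "k < length (permute_list (inv \<sigma>) (as[i := v]))"
  then have k': "k < length as" by simp
  have ik: "inv \<sigma> k < length as" using permutes_less[OF permutes_inv[OF \<sigma>] k'] .
  have "inv \<sigma> k = i \<longleftrightarrow> k = \<sigma> i" using \<sigma> by (metis permutes_inverses(1) permutes_inverses(2))
  then show "permute_list (inv \<sigma>) (as[i := v]) ! k = (permute_list (inv \<sigma>) as)[\<sigma> i := v] ! k"
    using k' ik unfolding permute_list_def by (auto simp: nth_list_update)
qed

lemma permute_list_inv_at: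
  assumes \<sigma>: "\<sigma> permutes {0..<length as}" and i: "i < length as"
  shows "permute_list (inv \<sigma>) as ! (\<sigma> i) = as ! i"
  using permutes_less[OF \<sigma> i] \<sigma> unfolding permute_list_def by (simp add: permutes_inverses(2))

locale sigma_mod =
  fixes sM :: "'k::field \<Rightarrow> 'm::ab_group_add \<Rightarrow> 'm" and M :: "nat \<Rightarrow> 'm set"
    and act :: "nat \<Rightarrow> (nat \<Rightarrow> nat) \<Rightarrow> 'm \<Rightarrow> 'm"
  assumes sigma_module_M: "sigma_module sM M act"
begin

lemma subspace_M: "module.subspace sM (M n)"
  using sigma_module_M unfolding sigma_module_def by auto

lemma zero_in_M: "0 \<in> M n"
  using subspace_M sigma_module_M by (simp add: sigma_module_def module.subspace_def module_iff_vector_space)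

lemma add_in_M: "x \<in> M n \<Longrightarrow> y \<in> M n \<Longrightarrow> x + y \<in> M n"
  using subspace_M sigma_module_M by (simp add: sigma_module_def module.subspace_def module_iff_vector_space)

lemma scale_in_M: "x \<in> M n \<Longrightarrow> sM c x \<in> M n"
  using subspace_M sigma_module_M by (simp add: sigma_module_def module.subspace_def module_iff_vector_space)

lemma sum_in_M: "finite I \<Longrightarrow> (\<And>i. i \<in> I \<Longrightarrow> f i \<in> M n) \<Longrightarrow> (\<Sum>i\<in>I. f i) \<in> M n"
  by (induction I rule: finite_induct) (auto intro: zero_in_M add_in_M)

lemma act_in_M: "\<sigma> permutes {0..<n} \<Longrightarrow> x \<in> M n \<Longrightarrow> act n \<sigma> x \<in> M n"
  using sigma_module_M unfolding sigma_module_def by simp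

lemma act_add: "\<sigma> permutes {0..<n} \<Longrightarrow> x \<in> M n \<Longrightarrow> y \<in> M n \<Longrightarrow> act n \<sigma> (x + y) = act n \<sigma> x + act n \<sigma> y"
  using sigma_module_M unfolding sigma_module_def by simp

lemma act_scale: "\<sigma> permutes {0..<n} \<Longrightarrow> x \<in> M n \<Longrightarrow> act n \<sigma> (sM c x) = sM c (act n \<sigma> x)"
  using sigma_module_M unfolding sigma_module_def by simp

lemma act_comp:
  "\<sigma> permutes {0..<n} \<Longrightarrow> \<tau> permutes {0..<n} \<Longrightarrow> x \<in> M n \<Longrightarrow> act n (\<sigma> \<circ> \<tau>) x = act n \<sigma> (act n \<tau> x)"
  using sigma_module_M unfolding sigma_module_def by simp

lemma act_sum:
  assumes "\<sigma> permutes {0..<n}" "finite I" "\<And>i. i \<in> I \<Longrightarrow> f i \<in> M n"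
  shows "act n \<sigma> (\<Sum>i\<in>I. f i) = (\<Sum>i\<in>I. act n \<sigma> (f i))"
  using assms(2,3)
proof (induction I rule: finite_induct)
  case empty
  show ?case using act_add[OF assms(1), of 0 0] zero_in_M by simp
next
  case (insert i I)
  then show ?case using act_add[OF assms(1), of "f i" "\<Sum>i\<in>I. f i"] sum_in_M[of I f n] by simp
qed

end

locale gamma_space = sigma_mod sM M act
  for sM :: "'k::field \<Rightarrow> 'm::ab_group_add \<Rightarrow> 'm" and M :: "nat \<Rightarrow> 'm set"
    and act :: "nat \<Rightarrow> (nat \<Rightarrow> nat) \<Rightarrow> 'm \<Rightarrow> 'm" +
  fixes sA :: "'k \<Rightarrow> 'a::ab_group_add \<Rightarrow> 'a"
  assumes vector_space_A: "vector_space sA"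
begin

abbreviation "R \<equiv> Rel sM M sA"

abbreviation "RG \<equiv> Rel_gens sM M sA"

abbreviation "InvA \<equiv> Inv sM M act sA"

lemma Rel_zero: "0 \<in> R" unfolding Rel_def by (rule free.span_zero)

lemma Rel_add: "v \<in> R \<Longrightarrow> w \<in> R \<Longrightarrow> v + w \<in> R" unfolding Rel_def by (rule free.span_add)

lemma Rel_diff: "v \<in> R \<Longrightarrow> w \<in> R \<Longrightarrow> v - w \<in> R" unfolding Rel_def by (rule free.span_diff)

lemma Rel_neg: "v \<in> R \<Longrightarrow> - v \<in> R" unfolding Rel_def by (rule free.span_neg)

lemma Rel_scale: "v \<in> R \<Longrightarrow> fscale c v \<in> R" unfolding Rel_def by (rule free.span_scale)

lemma Rel_sum: "(\<And>i. i \<in> I \<Longrightarrow> f i \<in> R) \<Longrightarrow> (\<Sum>i\<in>I. f i) \<in> R" unfolding Rel_def by (rule free.span_sum)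

lemma Rel_gen: "v \<in> RG \<Longrightarrow> v \<in> R" unfolding Rel_def by (rule free.span_base)

lemma Rel_add_left: "x \<in> M (length as) \<Longrightarrow> y \<in> M (length as) \<Longrightarrow>
   free_gen (x + y, as) - free_gen (x, as) - free_gen (y, as) \<in> R"
  by (rule Rel_gen) (auto simp: Rel_gens_def)

lemma Rel_scale_left: "x \<in> M (length as) \<Longrightarrow> free_gen (sM c x, as) - fscale c (free_gen (x, as)) \<in> R"
  by (rule Rel_gen) (auto simp: Rel_gens_def)

lemma Rel_add_entry: "x \<in> M (length as) \<Longrightarrow> i < length as \<Longrightarrow>
   free_gen (x, as[i := a + b]) - free_gen (x, as[i := a]) - free_gen (x, as[i := b]) \<in> R"
  by (rule Rel_gen) (unfold Rel_gens_def, blast)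

lemma Rel_scale_entry: "x \<in> M (length as) \<Longrightarrow> i < length as \<Longrightarrow>
   free_gen (x, as[i := sA c (as ! i)]) - fscale c (free_gen (x, as)) \<in> R"
  by (rule Rel_gen) (unfold Rel_gens_def, blast)

lemma subspace_Free: "free.subspace (Free M :: ('m \<times> 'a list \<Rightarrow> 'k) set)"
proof (rule free.subspaceI)
  show "0 \<in> Free M" unfolding Free_def by simp
  fix v w :: "'m \<times> 'a list \<Rightarrow> 'k" assume "v \<in> Free M" "w \<in> Free M"
  then show "v + w \<in> Free M"
    unfolding Free_def using finite_fsupp_add[of v w] by (simp add: fsupp_def) (metis add.left_neutral)
next
  fix c and v :: "'m \<times> 'a list \<Rightarrow> 'k" assume "v \<in> Free M"
  then show "fscale c v \<in> Free M" unfolding Free_def using finite_fsupp_fscale[of v c]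
    by (auto simp: fsupp_def fscale_def)
qed

lemma finite_fsupp_Free: "v \<in> Free M \<Longrightarrow> finite (fsupp v)"
  unfolding Free_def fsupp_def by simp

lemma free_gen_Free: "fst g \<in> M (length (snd g)) \<Longrightarrow> free_gen g \<in> Free M"
  unfolding Free_def free_gen_def by auto

lemma Rel_gens_subset_Free: "RG \<subseteq> Free M"
  unfolding Rel_gens_def
  by (auto intro!: free.subspace_diff[OF subspace_Free] free.subspace_scale[OF subspace_Free] free_gen_Free
      add_in_M scale_in_M)

lemma Rel_subset_Free: "R \<subseteq> Free M"
  unfolding Rel_def by (rule free.span_minimal[OF Rel_gens_subset_Free subspace_Free])

lemma gen_act_other: "length (snd g) \<noteq> n \<Longrightarrow> gen_act act n \<sigma> g = g"
  unfolding gen_act_def by simp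

lemma gen_act_length: "length as = n \<Longrightarrow> gen_act act n \<sigma> (x, as) = (act n \<sigma> x, permute_list (inv \<sigma>) as)"
  unfolding gen_act_def by simp

lemma push_gen_act_Rel_add_left:
  assumes \<sigma>: "\<sigma> permutes {0..<n}" and x: "x \<in> M (length as)" and y: "y \<in> M (length as)"
  shows "push (gen_act act n \<sigma>) (free_gen (x + y, as) - free_gen (x, as) - free_gen (y, as)) \<in> R"
proof (cases "length as = n")
  case True
  then show ?thesis using Rel_add_left[of "act n \<sigma> x" "permute_list (inv \<sigma>) as" "act n \<sigma> y"] \<sigma> x y
    by (simp add: push_diff finite_fsupp_diff push_free_gen gen_act_length act_add act_in_M)
qed (use Rel_add_left[OF x y] in \<open>simp add: push_diff finite_fsupp_diff push_free_gen gen_act_other\<close>)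

lemma push_gen_act_Rel_scale_left:
  assumes \<sigma>: "\<sigma> permutes {0..<n}" and x: "x \<in> M (length as)"
  shows "push (gen_act act n \<sigma>) (free_gen (sM c x, as) - fscale c (free_gen (x, as))) \<in> R"
proof (cases "length as = n")
  case True
  then show ?thesis using Rel_scale_left[of "act n \<sigma> x" "permute_list (inv \<sigma>) as" c] \<sigma> x
    by (simp add: push_diff finite_fsupp_fscale push_scale push_free_gen gen_act_length act_scale act_in_M)
qed (use Rel_scale_left[OF x] in \<open>simp add: push_diff finite_fsupp_fscale push_scale push_free_gen gen_act_other\<close>)

lemma push_gen_act_Rel_add_entry:
  assumes \<sigma>: "\<sigma> permutes {0..<n}" and x: "x \<in> M (length as)" and i: "i < length as"
  shows "push (gen_act act n \<sigma>) (free_gen (x, as[i := a + b]) - free_gen (x, as[i := a]) - free_gen (x, as[i := b])) \<in> R"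
proof (cases "length as = n")
  case True
  then show ?thesis
    using Rel_add_entry[of "act n \<sigma> x" "permute_list (inv \<sigma>) as" "\<sigma> i" a b] \<sigma> x i permutes_less[OF \<sigma>, of i]
    by (simp add: push_diff finite_fsupp_diff push_free_gen gen_act_length act_in_M permute_list_update)
qed (use Rel_add_entry[OF x i] in \<open>simp add: push_diff finite_fsupp_diff push_free_gen gen_act_other\<close>)

lemma push_gen_act_Rel_scale_entry:
  assumes \<sigma>: "\<sigma> permutes {0..<n}" and x: "x \<in> M (length as)" and i: "i < length as"
  shows "push (gen_act act n \<sigma>) (free_gen (x, as[i := sA c (as ! i)]) - fscale c (free_gen (x, as))) \<in> R"
proof (cases "length as = n")
  case True
  then show ?thesis
    using Rel_scale_entry[of "act n \<sigma> x" "permute_list (inv \<sigma>) as" "\<sigma> i" c] \<sigma> x i permutes_less[OF \<sigma>, of i]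
    by (simp add: push_diff finite_fsupp_fscale push_scale push_free_gen gen_act_length act_in_M
        permute_list_update permute_list_inv_at)
qed (use Rel_scale_entry[OF x i] in \<open>simp add: push_diff finite_fsupp_fscale push_scale push_free_gen gen_act_other\<close>)

lemma push_gen_act_Rel:
  assumes \<sigma>: "\<sigma> permutes {0..<n}" and v: "v \<in> R"
  shows "push (gen_act act n \<sigma>) v \<in> R"
  using v unfolding Rel_def
proof (rule push_span)
  fix u assume u: "u \<in> RG"
  then have "push (gen_act act n \<sigma>) u \<in> R"
    unfolding Rel_gens_def
    by (elim UnE CollectE exE conjE) (simp_all add: push_gen_act_Rel_add_left push_gen_act_Rel_scale_left
        push_gen_act_Rel_add_entry push_gen_act_Rel_scale_entry \<sigma>)
  then show "finite (fsupp u) \<and> push (gen_act act n \<sigma>) u \<in> free.span RG"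
    using u Rel_gens_subset_Free finite_fsupp_Free unfolding Rel_def by blast
qed

lemma InvA_iff: "v \<in> InvA \<longleftrightarrow> v \<in> Free M \<and> (\<forall>n \<sigma>. \<sigma> permutes {0..<n} \<longrightarrow> push (gen_act act n \<sigma>) v - v \<in> R)"
  unfolding Inv_def by simp

lemma finite_fsupp_InvA: "v \<in> InvA \<Longrightarrow> finite (fsupp v)"
  using InvA_iff finite_fsupp_Free by blast

lemma InvA_add:
  assumes "v \<in> InvA" "w \<in> InvA"
  shows "v + w \<in> InvA"
  unfolding InvA_iff
proof (intro conjI allI impI)
  show "v + w \<in> Free M" using free.subspace_add[OF subspace_Free] assms InvA_iff by blast
  fix n and \<sigma> :: "nat \<Rightarrow> nat" assume \<sigma>: "\<sigma> permutes {0..<n}"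
  have "push (gen_act act n \<sigma>) (v + w) - (v + w) =
     (push (gen_act act n \<sigma>) v - v) + (push (gen_act act n \<sigma>) w - w)"
    using push_add[OF finite_fsupp_InvA finite_fsupp_InvA] assms by simp
  then show "push (gen_act act n \<sigma>) (v + w) - (v + w) \<in> R"
    using assms \<sigma> Rel_add unfolding InvA_iff by metis
qed

lemma InvA_scale:
  assumes "v \<in> InvA"
  shows "fscale c v \<in> InvA"
  unfolding InvA_iff
proof (intro conjI allI impI)
  show "fscale c v \<in> Free M" using free.subspace_scale[OF subspace_Free] assms InvA_iff by blast
  fix n and \<sigma> :: "nat \<Rightarrow> nat" assume \<sigma>: "\<sigma> permutes {0..<n}"
  have "push (gen_act act n \<sigma>) (fscale c v) - fscale c v = fscale c (push (gen_act act n \<sigma>) v - v)"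
    by (simp only: push_scale) (simp add: fscale_def fun_eq_iff algebra_simps)
  then show "push (gen_act act n \<sigma>) (fscale c v) - fscale c v \<in> R"
    using assms \<sigma> Rel_scale unfolding InvA_iff by metis
qed

lemma Rel_in_InvA: "v \<in> R \<Longrightarrow> v \<in> InvA"
  unfolding InvA_iff using Rel_subset_Free Rel_diff push_gen_act_Rel by blast

lemma InvA_sum: "finite I \<Longrightarrow> (\<And>i. i \<in> I \<Longrightarrow> f i \<in> InvA) \<Longrightarrow> (\<Sum>i\<in>I. f i) \<in> InvA"
  by (induction I rule: finite_induct) (auto intro: InvA_add Rel_in_InvA Rel_zero)

end

section \<open>Blocks of compositions and Young subgroups\<close>

abbreviation block_start :: "nat list \<Rightarrow> nat \<Rightarrow> nat" where "block_start r i \<equiv> sum_list (take i r)"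

lemma block_start_Suc: "i < length r \<Longrightarrow> block_start r (Suc i) = block_start r i + r ! i"
  by (simp add: take_Suc_conv_app_nth)

lemma block_start_le_Suc: "block_start r i \<le> block_start r (Suc i)"
  by (cases "i < length r") (simp_all add: block_start_Suc)

lemma block_start_mono: "i \<le> j \<Longrightarrow> block_start r i \<le> block_start r j"
  by (induction j rule: dec_induct) (auto intro: le_trans block_start_le_Suc)

lemma block_start_le_sum_list: "block_start r i \<le> sum_list r"
proof -
  have "sum_list r = block_start r i + sum_list (drop i r)"
    by (metis append_take_drop_id sum_list_append)
  then show ?thesis by simp
qed

lemma blk_Cons_0: "blk (a # r) 0 = {0..<a}" unfolding blk_def by simp

lemma blk_Cons_Suc: "blk (a # r) (Suc i) = {a + block_start r i ..< a + block_start r (Suc i)}"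
  unfolding blk_def by simp

lemma blk_Cons_Suc_image: "blk (a # r) (Suc i) = (\<lambda>j. a + j) ` blk r i"
  unfolding blk_Cons_Suc blk_def by (simp add: image_add_atLeastLessThan add.commute)

lemma blk_subset: "blk r i \<subseteq> {0..<sum_list r}"
  unfolding blk_def using block_start_le_sum_list[where r=r and i="Suc i"] by auto

lemma blk_disjoint: assumes "i \<noteq> j" shows "blk r i \<inter> blk r j = {}"
proof -
  { fix i j :: nat assume "i < j"
    then have "block_start r (Suc i) \<le> block_start r j" by (intro block_start_mono) simp
    then have "blk r i \<inter> blk r j = {}" unfolding blk_def by auto }
  then show ?thesis using assms by (metis Int_commute linorder_neqE_nat)
qed

lemma blk_cover: "j < sum_list r \<Longrightarrow> \<exists>i<length r. j \<in> blk r i"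
proof (induction r arbitrary: j)
  case Nil then show ?case by simp
next
  case (Cons a r)
  show ?case
  proof (cases "j < a")
    case True then show ?thesis by (intro exI[of _ 0]) (simp add: blk_Cons_0)
  next
    case False
    then obtain i where "i < length r" "j - a \<in> blk r i" using Cons by (metis add_diff_inverse_nat add_less_cancel_left sum_list.Cons)
    then show ?thesis using False by (intro exI[of _ "Suc i"]) (auto simp: blk_Cons_Suc_image image_iff intro!: bexI[of _ "j-a"])
  qed
qed

lemma blk_unique: "i < length r \<Longrightarrow> i' < length r \<Longrightarrow> j \<in> blk r i \<Longrightarrow> j \<in> blk r i' \<Longrightarrow> i = i'"
  using blk_disjoint by blast

lemma length_rep_word[simp]: "length (rep_word r as) = sum_list r"
proof -
  have "length (rep_word r as) = sum_list (map (\<lambda>i. r ! i) [0..<length r])"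
    unfolding rep_word_def by (simp add: length_concat comp_def)
  also have "\<dots> = sum_list r" by (simp add: map_nth)
  finally show ?thesis .
qed

lemma rep_word_Cons: "length as = length r \<Longrightarrow> rep_word (a # r) (b # as) = replicate a b @ rep_word r as"
proof -
  assume l: "length as = length r"
  have "[0..<length (a # r)] = 0 # map Suc [0..<length r]" by (simp add: map_Suc_upt upt_conv_Cons del: upt_Suc)
  then show ?thesis unfolding rep_word_def by (simp add: comp_def)
qed

lemma nth_rep_word_blk:
  "length as = length r \<Longrightarrow> i < length r \<Longrightarrow> j \<in> blk r i \<Longrightarrow> rep_word r as ! j = as ! i"
proof (induction r arbitrary: as i j)
  case Nil then show ?case by simp
next
  case (Cons a r)
  obtain b as' where as: "as = b # as'" using Cons(2) by (cases as) auto
  have l: "length as' = length r" using Cons(2) as by simp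
  show ?case
  proof (cases i)
    case 0 then show ?thesis using Cons(4) as l by (simp add: rep_word_Cons blk_Cons_0 nth_append)
  next
    case (Suc i')
    then obtain j' where j: "j = a + j'" "j' \<in> blk r i'" using Cons(4) by (auto simp: blk_Cons_Suc_image)
    have "j' < sum_list r" using blk_subset[of r i'] j(2) by auto
    then show ?thesis using Cons.IH[OF l _ j(2)] Cons(3) Suc as l j(1) by (simp add: rep_word_Cons nth_append)
  qed
qed

lemma map_rep_word: "length as = length r \<Longrightarrow> map g (rep_word r as) = rep_word r (map g as)"
  unfolding rep_word_def by (simp add: map_concat comp_def) (intro arg_cong[where f=concat] map_cong, auto)

lemma rep_word_nthE:
  assumes "length as = length r" "j < sum_list r"
  obtains i where "i < length r" "j \<in> blk r i" "rep_word r as ! j = as ! i"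
proof -
  obtain i where "i < length r" "j \<in> blk r i" using blk_cover[OF assms(2)] by auto
  then show ?thesis using that nth_rep_word_blk[OF assms(1)] by simp
qed

lemma YoungD: "\<sigma> \<in> Young r \<Longrightarrow> \<sigma> permutes {0..<sum_list r}"
  "\<sigma> \<in> Young r \<Longrightarrow> i < length r \<Longrightarrow> \<sigma> ` blk r i = blk r i"
  unfolding Young_def by auto

lemma perm_group_Sym: "perm_group (Sym n)"
  unfolding perm_group_def Sym_def
  by (auto simp: finite_permutations permutes_id permutes_compose permutes_inv permutes_bij)

lemma Sym_iff: "\<sigma> \<in> Sym n \<longleftrightarrow> \<sigma> permutes {0..<n}" unfolding Sym_def by simp

lemma Young_subset_Sym: "Young r \<subseteq> Sym (sum_list r)" unfolding Young_def Sym_def by auto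

lemma bij_inv_image_eq: "bij \<sigma> \<Longrightarrow> \<sigma> ` B = B \<Longrightarrow> inv \<sigma> ` B = B"
  by (metis bij_is_inj image_inv_f_f)

lemma perm_group_Young: "perm_group (Young r)"
  unfolding perm_group_def
proof (intro conjI ballI)
  show "finite (Young r)" using Young_subset_Sym perm_groupD(1)[OF perm_group_Sym] by (rule finite_subset)
  show "id \<in> Young r" unfolding Young_def by (simp add: permutes_id)
  fix \<sigma> assume s: "\<sigma> \<in> Young r"
  have p: "\<sigma> permutes {0..<sum_list r}" using YoungD(1)[OF s] .
  then show "bij \<sigma>" by (rule permutes_bij)
  show "inv \<sigma> \<in> Young r" unfolding Young_def
    using permutes_inv[OF p] bij_inv_image_eq[OF permutes_bij[OF p] YoungD(2)[OF s]] by simp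
  fix \<tau> assume t: "\<tau> \<in> Young r"
  have "(\<sigma> \<circ> \<tau>) ` blk r i = blk r i" if "i < length r" for i
    using YoungD(2)[OF s that] YoungD(2)[OF t that] by (metis image_comp)
  then show "\<sigma> \<circ> \<tau> \<in> Young r" unfolding Young_def using YoungD(1)[OF s] YoungD(1)[OF t]
    by (simp add: permutes_compose)
qed

lemma Young_blk_closed:
  assumes "\<tau> \<in> Young r" "i < length r" "j \<in> blk r i"
  shows "\<tau> j \<in> blk r i" "inv \<tau> j \<in> blk r i"
proof -
  have "\<tau> j \<in> \<tau> ` blk r i" using assms(3) by (rule imageI)
  then show "\<tau> j \<in> blk r i" unfolding YoungD(2)[OF assms(1,2)] .
  have "inv \<tau> \<in> Young r" using perm_groupD(5)[OF perm_group_Young assms(1)] .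
  then have e: "inv \<tau> ` blk r i = blk r i" using YoungD(2)[OF _ assms(2)] by simp
  have "inv \<tau> j \<in> inv \<tau> ` blk r i" using assms(3) by (rule imageI)
  then show "inv \<tau> j \<in> blk r i" unfolding e .
qed

lemma Young_fixes_rep_word:
  assumes \<tau>: "\<tau> \<in> Young r" and l: "length as = length r"
  shows "permute_list (inv \<tau>) (rep_word r as) = rep_word r as"
proof (rule nth_equalityI)
  show "length (permute_list (inv \<tau>) (rep_word r as)) = length (rep_word r as)" by simp
  fix k assume "k < length (permute_list (inv \<tau>) (rep_word r as))"
  then have k: "k < sum_list r" by simp
  obtain i where i: "i < length r" "k \<in> blk r i" "rep_word r as ! k = as ! i" using rep_word_nthE[OF l k] .
  have "inv \<tau> k \<in> blk r i" using Young_blk_closed(2)[OF \<tau> i(1,2)] .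
  then have "rep_word r as ! (inv \<tau> k) = as ! i" using nth_rep_word_blk[OF l i(1)] by simp
  then show "permute_list (inv \<tau>) (rep_word r as) ! k = rep_word r as ! k"
    using k i(3) unfolding permute_list_def by simp
qed

lemma Young_subset_coarser:
  assumes s: "sum_list r' = sum_list r"
    and u: "\<And>i'. i' < length r' \<Longrightarrow> \<exists>I. blk r' i' = (\<Union>i\<in>I. blk r i) \<and> I \<subseteq> {..<length r}"
  shows "Young r \<subseteq> Young r'"
proof
  fix \<sigma> assume \<sigma>: "\<sigma> \<in> Young r"
  show "\<sigma> \<in> Young r'" unfolding Young_def
  proof (intro CollectI conjI allI impI)
    show "\<sigma> permutes {0..<sum_list r'}" using YoungD(1)[OF \<sigma>] s by simp
    fix i' assume "i' < length r'"
    then obtain I where I: "blk r' i' = (\<Union>i\<in>I. blk r i)" "I \<subseteq> {..<length r}" using u by blast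
    have "\<sigma> ` (\<Union>i\<in>I. blk r i) = (\<Union>i\<in>I. \<sigma> ` blk r i)" by (rule image_UN)
    also have "\<dots> = (\<Union>i\<in>I. blk r i)"
      by (rule SUP_cong[OF refl]) (use YoungD(2)[OF \<sigma>] I(2) in auto)
    finally show "\<sigma> ` blk r' i' = blk r' i'" using I(1) by simp
  qed
qed

section \<open>The tensors representing the operations; relation (beta6)\<close>

declare plus_fun_apply[simp del] zero_fun_apply[simp del]

lemma fscale_sum: "fscale c (\<Sum>i\<in>I. f i) = (\<Sum>i\<in>I. fscale c (f i :: _ \<Rightarrow> 'k::field))"
  by (induction I rule: infinite_finite_induct) (auto simp: fscale_def fun_eq_iff algebra_simps zero_fun_apply plus_fun_apply)

lemma coset_sum_add: "coset_sum G H (\<lambda>\<sigma>. f \<sigma> + g \<sigma>) = coset_sum G H f + coset_sum G H g"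
  unfolding coset_sum_eq by (simp add: sum.distrib)

lemma coset_sum_diff: "coset_sum G H (\<lambda>\<sigma>. f \<sigma> - g \<sigma>) = coset_sum G H f - coset_sum G H (g :: _ \<Rightarrow> 'b::ab_group_add)"
  unfolding coset_sum_eq by (simp add: sum_subtractf)

lemma coset_sum_fscale: "coset_sum G H (\<lambda>\<sigma>. fscale c (f \<sigma>)) = fscale c (coset_sum G H (f :: _ \<Rightarrow> _ \<Rightarrow> 'k::field))"
  unfolding coset_sum_eq by (simp add: fscale_sum)

lemma coset_sum_sum: "finite L \<Longrightarrow> coset_sum G H (\<lambda>\<sigma>. \<Sum>l\<in>L. f l \<sigma>) = (\<Sum>l\<in>L. coset_sum G H (f l))"
  unfolding coset_sum_eq by (rule sum.swap)

context sigma_mod begin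

definition orbit_gen :: "nat \<Rightarrow> (nat \<Rightarrow> nat) \<Rightarrow> 'm \<Rightarrow> 'a list \<Rightarrow> 'm \<times> 'a list \<Rightarrow> 'k"
  where "orbit_gen n \<sigma> x w = free_gen (act n \<sigma> x, permute_list (inv \<sigma>) w)"

definition beta_vec :: "'m \<Rightarrow> nat list \<Rightarrow> 'a list \<Rightarrow> 'm \<times> 'a list \<Rightarrow> 'k"
  where "beta_vec x r as = coset_sum (Sym (sum_list r)) (Young r) (\<lambda>\<sigma>. orbit_gen (sum_list r) \<sigma> x (rep_word r as))"

lemma beta_of_eq: "beta_of act F x r as = F (beta_vec x r as)"
  unfolding beta_of_def beta_vec_def orbit_gen_def ..

lemma Minv_iff: "x \<in> Minv M act r \<longleftrightarrow> x \<in> M (sum_list r) \<and> (\<forall>\<tau>\<in>Young r. act (sum_list r) \<tau> x = x)"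
  unfolding Minv_def by simp

lemma orbit_gen_comp:
  assumes \<sigma>: "\<sigma> \<in> Sym n" and \<tau>: "\<tau> \<in> Sym n" and x: "x \<in> M n" and w: "length w = n"
  shows "orbit_gen n (\<sigma> \<circ> \<tau>) x w = free_gen (act n \<sigma> (act n \<tau> x), permute_list (inv \<sigma>) (permute_list (inv \<tau>) w))"
proof -
  have ps: "\<sigma> permutes {0..<n}" "\<tau> permutes {0..<n}" using \<sigma> \<tau> Sym_iff by auto
  have "inv (\<sigma> \<circ> \<tau>) = inv \<tau> \<circ> inv \<sigma>" using ps by (simp add: o_inv_distrib permutes_bij)
  moreover have "inv \<sigma> permutes {..<length w}" using permutes_inv[OF ps(1)] w by (simp add: atLeast0LessThan)
  ultimately have "permute_list (inv (\<sigma> \<circ> \<tau>)) w = permute_list (inv \<sigma>) (permute_list (inv \<tau>) w)"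
    by (simp add: permute_list_compose)
  then show ?thesis unfolding orbit_gen_def using act_comp[OF ps x] by simp
qed

lemma right_invariant_orbit_gen:
  assumes x: "x \<in> Minv M act r" and l: "length as = length r"
  shows "right_invariant (Sym (sum_list r)) (Young r) (\<lambda>\<sigma>. orbit_gen (sum_list r) \<sigma> x (rep_word r as))"
  unfolding right_invariant_def
proof (intro ballI)
  fix \<sigma> \<tau> assume \<sigma>: "\<sigma> \<in> Sym (sum_list r)" and \<tau>: "\<tau> \<in> Young r"
  have \<tau>': "\<tau> \<in> Sym (sum_list r)" using \<tau> Young_subset_Sym by blast
  show "orbit_gen (sum_list r) (\<sigma> \<circ> \<tau>) x (rep_word r as) = orbit_gen (sum_list r) \<sigma> x (rep_word r as)"
    unfolding orbit_gen_comp[OF \<sigma> \<tau>' conjunct1[OF x[unfolded Minv_iff]] length_rep_word]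
    using x \<tau> Young_fixes_rep_word[OF \<tau> l] unfolding Minv_iff orbit_gen_def by simp
qed

lemma Minv_in_M: "x \<in> Minv M act r \<Longrightarrow> x \<in> M (sum_list r)" unfolding Minv_iff by simp

end

context gamma_space begin

lemma orbit_gen_Free: "\<sigma> \<in> Sym n \<Longrightarrow> x \<in> M n \<Longrightarrow> length w = n \<Longrightarrow> orbit_gen n \<sigma> x w \<in> Free M"
  unfolding orbit_gen_def by (rule free_gen_Free) (simp add: act_in_M Sym_iff)

lemma push_gen_act_orbit_gen:
  assumes \<sigma>: "\<sigma> \<in> Sym n" and \<tau>: "\<tau> \<in> Sym n" and x: "x \<in> M n" and w: "length w = n"
  shows "push (gen_act act n \<sigma>) (orbit_gen n \<tau> x w) = orbit_gen n (\<sigma> \<circ> \<tau>) x w"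
proof -
  have "push (gen_act act n \<sigma>) (orbit_gen n \<tau> x w)
      = free_gen (act n \<sigma> (act n \<tau> x), permute_list (inv \<sigma>) (permute_list (inv \<tau>) w))"
    unfolding orbit_gen_def push_free_gen using w by (simp add: gen_act_length)
  then show ?thesis using orbit_gen_comp[OF assms] by simp
qed

lemma push_gen_act_orbit_gen_other:
  assumes w: "length w \<noteq> n'"
  shows "push (gen_act act n' \<sigma>) (orbit_gen n \<tau> x w) = orbit_gen n \<tau> x w"
  unfolding orbit_gen_def push_free_gen using w by (simp add: gen_act_other)

lemma beta_vec_Free:
  fixes as :: "'a list"
  assumes x: "x \<in> Minv M act r"
  shows "beta_vec x r as \<in> Free M"
  unfolding beta_vec_def coset_sum_eq
proof (rule free.subspace_sum[OF subspace_Free])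
  fix C assume C: "C \<in> lcosets (Sym (sum_list r)) (Young r)"
  have "coset_rep C \<in> Sym (sum_list r)" using coset_rep_in_group[OF perm_group_Sym perm_group_Young Young_subset_Sym C] .
  then show "orbit_gen (sum_list r) (coset_rep C) x (rep_word r as) \<in> Free M" by (rule orbit_gen_Free) (use Minv_in_M[OF x] in auto)
qed

lemma finite_fsupp_orbit_gen: "finite (fsupp (orbit_gen n \<sigma> x w))" unfolding orbit_gen_def by simp

lemma push_gen_act_beta_vec:
  fixes as :: "'a list"
  assumes x: "x \<in> Minv M act r" and l: "length as = length r" and \<sigma>': "\<sigma>' permutes {0..<n'}"
  shows "push (gen_act act n' \<sigma>') (beta_vec x r as) = beta_vec x r as"
proof -
  let ?n = "sum_list r" and ?w = "rep_word r as"
  let ?G = "Sym ?n" and ?H = "Young r"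
  have "push (gen_act act n' \<sigma>') (beta_vec x r as) = (\<Sum>C\<in>lcosets ?G ?H. push (gen_act act n' \<sigma>') (orbit_gen ?n (coset_rep C) x ?w))"
    unfolding beta_vec_def coset_sum_eq by (rule push_sum[OF finite_lcosets[OF perm_group_Sym] finite_fsupp_orbit_gen])
  also have "\<dots> = beta_vec x r as"
  proof (cases "n' = ?n")
    case True
    have s': "\<sigma>' \<in> ?G" using \<sigma>' True Sym_iff by simp
    have "(\<Sum>C\<in>lcosets ?G ?H. push (gen_act act n' \<sigma>') (orbit_gen ?n (coset_rep C) x ?w))
        = (\<Sum>C\<in>lcosets ?G ?H. orbit_gen ?n (\<sigma>' \<circ> coset_rep C) x ?w)"
    proof (rule sum.cong[OF refl])
      fix C assume C: "C \<in> lcosets ?G ?H"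
      have rC: "coset_rep C \<in> ?G" using coset_rep_in_group[OF perm_group_Sym perm_group_Young Young_subset_Sym C] .
      show "push (gen_act act n' \<sigma>') (orbit_gen ?n (coset_rep C) x ?w) = orbit_gen ?n (\<sigma>' \<circ> coset_rep C) x ?w"
        using push_gen_act_orbit_gen[OF s' rC Minv_in_M[OF x] length_rep_word] True by simp
    qed
    also have "\<dots> = coset_sum ?G ?H (\<lambda>\<sigma>. orbit_gen ?n (\<sigma>' \<circ> \<sigma>) x ?w)" unfolding coset_sum_eq ..
    also have "\<dots> = beta_vec x r as" unfolding beta_vec_def
      by (rule coset_sum_left_translate[OF perm_group_Sym perm_group_Young Young_subset_Sym right_invariant_orbit_gen[OF x l] s'])
    finally show ?thesis .
  next
    case False
    have "length ?w \<noteq> n'" using False by simp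
    then show ?thesis unfolding beta_vec_def coset_sum_eq using push_gen_act_orbit_gen_other[of ?w n'] by simp
  qed
  finally show ?thesis .
qed

lemma beta_vec_InvA:
  fixes as :: "'a list"
  assumes x: "x \<in> Minv M act r" and l: "length as = length r"
  shows "beta_vec x r as \<in> InvA"
  unfolding InvA_iff using beta_vec_Free[OF x] push_gen_act_beta_vec[OF x l] Rel_zero by simp

lemma orbit_gen_linear_Rel:
  fixes w :: "'a list"
  assumes \<sigma>: "\<sigma> \<in> Sym n" and x: "x \<in> M n" and y: "y \<in> M n" and w: "length w = n"
  shows "orbit_gen n \<sigma> (sM c x + y) w - (fscale c (orbit_gen n \<sigma> x w) + orbit_gen n \<sigma> y w) \<in> R"
proof -
  have s: "\<sigma> permutes {0..<n}" using \<sigma> Sym_iff by simp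
  let ?w = "permute_list (inv \<sigma>) w"
  have lw: "length ?w = n" using w by simp
  have a: "act n \<sigma> (sM c x + y) = sM c (act n \<sigma> x) + act n \<sigma> y"
    using act_add[OF s scale_in_M[OF x] y] act_scale[OF s x] by simp
  have ax: "act n \<sigma> x \<in> M (length ?w)" "act n \<sigma> y \<in> M (length ?w)" "sM c (act n \<sigma> x) \<in> M (length ?w)"
    using act_in_M[OF s] x y lw scale_in_M by auto
  have "orbit_gen n \<sigma> (sM c x + y) w - (fscale c (orbit_gen n \<sigma> x w) + orbit_gen n \<sigma> y w) =
     (free_gen (sM c (act n \<sigma> x) + act n \<sigma> y, ?w) - free_gen (sM c (act n \<sigma> x), ?w) - free_gen (act n \<sigma> y, ?w))
     + (free_gen (sM c (act n \<sigma> x), ?w) - fscale c (free_gen (act n \<sigma> x, ?w)))"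
    unfolding orbit_gen_def a by (simp add: algebra_simps)
  also have "\<dots> \<in> R" using Rel_add[OF Rel_add_left[OF ax(3,2)] Rel_scale_left[OF ax(1)]] .
  finally show ?thesis .
qed

lemma beta_vec_linear_Rel:
  fixes as :: "'a list"
  assumes x: "x \<in> Minv M act r" and y: "y \<in> Minv M act r"
  shows "beta_vec (sM c x + y) r as - (fscale c (beta_vec x r as) + beta_vec y r as) \<in> R"
proof -
  have "beta_vec (sM c x + y) r as - (fscale c (beta_vec x r as) + beta_vec y r as) =
    coset_sum (Sym (sum_list r)) (Young r) (\<lambda>\<sigma>. orbit_gen (sum_list r) \<sigma> (sM c x + y) (rep_word r as) -
       (fscale c (orbit_gen (sum_list r) \<sigma> x (rep_word r as)) + orbit_gen (sum_list r) \<sigma> y (rep_word r as)))"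
    unfolding beta_vec_def coset_sum_diff coset_sum_add coset_sum_fscale ..
  also have "\<dots> \<in> R" unfolding coset_sum_eq
  proof (rule Rel_sum)
    fix C assume C: "C \<in> lcosets (Sym (sum_list r)) (Young r)"
    have "coset_rep C \<in> Sym (sum_list r)" using coset_rep_in_group[OF perm_group_Sym perm_group_Young Young_subset_Sym C] .
    then show "orbit_gen (sum_list r) (coset_rep C) (sM c x + y) (rep_word r as) -
       (fscale c (orbit_gen (sum_list r) (coset_rep C) x (rep_word r as)) + orbit_gen (sum_list r) (coset_rep C) y (rep_word r as)) \<in> R"
      by (rule orbit_gen_linear_Rel) (use Minv_in_M[OF x] Minv_in_M[OF y] in auto)
  qed
  finally show ?thesis .
qed

end

locale gamma_object = gamma_space sM M act sA
  for sM :: "'k::field \<Rightarrow> 'm::ab_group_add \<Rightarrow> 'm" and M :: "nat \<Rightarrow> 'm set"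
    and act :: "nat \<Rightarrow> (nat \<Rightarrow> nat) \<Rightarrow> 'm \<Rightarrow> 'm" and sA :: "'k \<Rightarrow> 'a::ab_group_add \<Rightarrow> 'a" +
  fixes F :: "('m \<times> 'a list \<Rightarrow> 'k) \<Rightarrow> 'a"
  assumes gamma_obj_F: "gamma_obj sM M act sA F"
begin

lemma F_add: "v \<in> InvA \<Longrightarrow> w \<in> InvA \<Longrightarrow> F (v + w) = F v + F w"
  using gamma_obj_F unfolding gamma_obj_def by blast

lemma F_scale: "v \<in> InvA \<Longrightarrow> F (fscale c v) = sA c (F v)"
  using gamma_obj_F unfolding gamma_obj_def by blast

lemma F_Rel: "v \<in> R \<Longrightarrow> F v = 0"
  using gamma_obj_F unfolding gamma_obj_def by blast

lemma F_eq_mod_Rel: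
  assumes "v \<in> InvA" "w - v \<in> R"
  shows "F w = F v"
proof -
  have "F (v + (w - v)) = F v + F (w - v)" by (rule F_add[OF assms(1) Rel_in_InvA[OF assms(2)]])
  then show ?thesis using F_Rel[OF assms(2)] by simp
qed

lemma F_sum: "finite I \<Longrightarrow> (\<And>i. i \<in> I \<Longrightarrow> f i \<in> InvA) \<Longrightarrow> F (\<Sum>i\<in>I. f i) = (\<Sum>i\<in>I. F (f i))"
proof (induction I rule: finite_induct)
  case empty
  show ?case using F_Rel[OF Rel_zero] by (simp only: sum.empty)
next
  case (insert i I)
  have "(\<Sum>i\<in>I. f i) \<in> InvA" by (rule InvA_sum) (use insert in auto)
  then have "F (f i + sum f I) = F (f i) + F (sum f I)" using insert F_add[of "f i" "\<Sum>i\<in>I. f i"] by blast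
  moreover have "F (sum f I) = (\<Sum>i\<in>I. F (f i))" by (rule insert.IH) (use insert.prems in auto)
  ultimately show ?case unfolding sum.insert[OF insert(1,2)] by simp
qed

lemma beta_of_linear:
  assumes x: "x \<in> Minv M act r" and y: "y \<in> Minv M act r" and l: "length as = length r"
  shows "beta_of act F (sM c x + y) r as = sA c (beta_of act F x r as) + beta_of act F y r as"
proof -
  have ix: "beta_vec x r as \<in> InvA" "beta_vec y r as \<in> InvA" using beta_vec_InvA x y l by auto
  have "F (beta_vec (sM c x + y) r as) = F (fscale c (beta_vec x r as) + beta_vec y r as)"
    by (rule F_eq_mod_Rel[OF InvA_add[OF InvA_scale[OF ix(1)] ix(2)] beta_vec_linear_Rel[OF x y]])
  also have "\<dots> = sA c (F (beta_vec x r as)) + F (beta_vec y r as)"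
    using F_add[OF InvA_scale[OF ix(1)] ix(2)] F_scale[OF ix(1)] by simp
  finally show ?thesis unfolding beta_of_eq .
qed

end

section \<open>Relations (beta2), (beta3) and functoriality\<close>

declare minus_apply[simp del] uminus_apply[simp del]

lemma Young_Cons_0: "Young (0 # r) = Young r"
proof -
  have "blk (0 # r) (Suc i) = blk r i" for i by (simp add: blk_Cons_Suc_image)
  then show ?thesis unfolding Young_def by (simp add: All_less_Suc2 blk_Cons_0)
qed

context gamma_space begin

lemma Rel_scale_entries:
  fixes v :: "'a list"
  assumes y: "y \<in> M (length v)" and P: "finite P" "P \<subseteq> {..<length v}"
    and v': "length v' = length v" "\<And>j. j < length v \<Longrightarrow> v' ! j = (if j \<in> P then sA c (v ! j) else v ! j)"
  shows "free_gen (y, v') - fscale (c ^ card P) (free_gen (y, v)) \<in> R"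
  using P(1) v' P(2)
proof (induction P arbitrary: v' rule: finite_induct)
  case empty
  then have "v' = v" by (intro nth_equalityI) auto
  then show ?case using Rel_zero by (simp add: fscale_def)
next
  case (insert p P)
  define v'' where "v'' = v'[p := v ! p]"
  have p: "p < length v" using insert.prems(3) by simp
  have l'': "length v'' = length v" using insert.prems(1) v''_def by simp
  have n'': "v'' ! j = (if j \<in> P then sA c (v ! j) else v ! j)" if "j < length v" for j
    using insert.prems(2)[OF that] insert.hyps(2) that insert.prems(1) unfolding v''_def
    by (cases "j = p") (auto simp: nth_list_update)
  have IH: "free_gen (y, v'') - fscale (c ^ card P) (free_gen (y, v)) \<in> R"
    using insert.IH[OF l'' n''] insert.prems(3) by simp
  have "v' = v''[p := sA c (v'' ! p)]"
    using insert.prems(1,2) p l'' unfolding v''_def by (intro nth_equalityI) (auto simp: nth_list_update)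
  then have step: "free_gen (y, v') - fscale c (free_gen (y, v'')) \<in> R"
    using Rel_scale_entry[of y v'' p c] y l'' p by simp
  have "free_gen (y, v') - fscale (c ^ card (insert p P)) (free_gen (y, v)) =
     (free_gen (y, v') - fscale c (free_gen (y, v''))) +
     fscale c (free_gen (y, v'') - fscale (c ^ card P) (free_gen (y, v)))"
    using insert.hyps by (simp add: fscale_def fun_eq_iff algebra_simps minus_apply plus_fun_apply)
  also have "\<dots> \<in> R" using Rel_add[OF step Rel_scale[OF IH]] .
  finally show ?case .
qed

lemma orbit_gen_scale_block:
  assumes \<sigma>: "\<sigma> \<in> Sym n" and x: "x \<in> M n" and lu: "r1 + length u = n"
  shows "orbit_gen n \<sigma> x (replicate r1 (sA c a) @ u) - fscale (c ^ r1) (orbit_gen n \<sigma> x (replicate r1 a @ u)) \<in> R"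
proof -
  have sp: "\<sigma> permutes {0..<n}" using \<sigma> Sym_iff by simp
  let ?v = "permute_list (inv \<sigma>) (replicate r1 a @ u)"
  let ?v' = "permute_list (inv \<sigma>) (replicate r1 (sA c a) @ u)"
  define P where "P = \<sigma> ` {0..<r1}"
  have lv: "length ?v = n" using lu by simp
  have P_iff: "j \<in> P \<longleftrightarrow> inv \<sigma> j < r1" for j
    unfolding P_def using bij_image_mem_iff[OF permutes_bij[OF sp]] by simp
  have card_P: "card P = r1" unfolding P_def
    using card_image[OF inj_on_subset[OF permutes_inj[OF sp] subset_UNIV]] by simp
  have P_sub: "P \<subseteq> {..<length ?v}" unfolding P_def lv using permutes_less[OF sp] lu by auto
  have v'_nth: "?v' ! j = (if j \<in> P then sA c (?v ! j) else ?v ! j)" if j: "j < length ?v" for j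
    using j lv lu permutes_less[OF permutes_inv[OF sp], of j] P_iff[of j]
    unfolding permute_list_def by (auto simp: nth_append)
  have "free_gen (act n \<sigma> x, ?v') - fscale (c ^ card P) (free_gen (act n \<sigma> x, ?v)) \<in> R"
    by (rule Rel_scale_entries[OF _ _ P_sub]) (use act_in_M[OF sp x] lv v'_nth lu in \<open>auto simp: P_def\<close>)
  then show ?thesis unfolding orbit_gen_def card_P .
qed

lemma gamma_map_beta_vec:
  fixes as :: "'a list" and g :: "'a \<Rightarrow> 'b"
  assumes l: "length as = length r"
  shows "gamma_map g (beta_vec x r as) = beta_vec x r (map g as)"
proof -
  have pf: "push (\<lambda>(x, as). (x, map g as)) (orbit_gen (sum_list r) \<sigma> x (rep_word r as)) =
      orbit_gen (sum_list r) \<sigma> x (rep_word r (map g as))"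
    if "\<sigma> \<in> Sym (sum_list r)" for \<sigma>
  proof -
    have ip: "inv \<sigma> permutes {..<length (rep_word r as)}" using that Sym_iff permutes_inv
      by (simp add: atLeast0LessThan)
    show ?thesis unfolding orbit_gen_def push_free_gen
      using permute_list_map[OF ip, of g] map_rep_word[OF l, of g] by simp
  qed
  show ?thesis unfolding gamma_map_def beta_vec_def coset_sum_eq
    by (subst push_sum[OF finite_lcosets[OF perm_group_Sym] finite_fsupp_orbit_gen])
      (rule sum.cong[OF refl] pf coset_rep_in_group[OF perm_group_Sym perm_group_Young Young_subset_Sym])+
qed

end

context gamma_object begin

lemma beta_of_Cons_0:
  assumes l: "length as = length r"
  shows "beta_of act F x (0 # r) (a0 # as) = beta_of act F x r as"
  unfolding beta_of_eq beta_vec_def using l by (simp add: Young_Cons_0 rep_word_Cons)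

lemma beta_of_scale:
  assumes x: "x \<in> Minv M act (r1 # r)" and l: "length as = length r"
  shows "beta_of act F x (r1 # r) (sA c a1 # as) = sA (c ^ r1) (beta_of act F x (r1 # r) (a1 # as))"
proof -
  let ?r = "r1 # r" and ?n = "sum_list (r1 # r)"
  have ix: "beta_vec x ?r (a1 # as) \<in> InvA" using beta_vec_InvA[OF x] l by simp
  have "beta_vec x ?r (sA c a1 # as) - fscale (c ^ r1) (beta_vec x ?r (a1 # as)) =
     coset_sum (Sym ?n) (Young ?r) (\<lambda>\<sigma>. orbit_gen ?n \<sigma> x (replicate r1 (sA c a1) @ rep_word r as) -
       fscale (c ^ r1) (orbit_gen ?n \<sigma> x (replicate r1 a1 @ rep_word r as)))"
    unfolding beta_vec_def coset_sum_diff coset_sum_fscale using l by (simp add: rep_word_Cons)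
  also have "\<dots> \<in> R" unfolding coset_sum_eq
    by (intro Rel_sum orbit_gen_scale_block)
      (use Minv_in_M[OF x] coset_rep_in_group[OF perm_group_Sym perm_group_Young Young_subset_Sym[of ?r]] in auto)
  finally have "F (beta_vec x ?r (sA c a1 # as)) = F (fscale (c ^ r1) (beta_vec x ?r (a1 # as)))"
    by (rule F_eq_mod_Rel[OF InvA_scale[OF ix]])
  then show ?thesis unfolding beta_of_eq using F_scale[OF ix] by simp
qed

end

section \<open>Relation (beta4)\<close>

lemma block_start_telescope: "a \<le> b \<Longrightarrow> b \<le> length r \<Longrightarrow> block_start r b = block_start r a + (\<Sum>i\<in>{a..<b}. r ! i)"
proof (induction b rule: dec_induct)
  case base then show ?case by simp
next
  case (step b)
  then show ?case by (simp add: block_start_Suc)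
qed

lemma blk_union: "a \<le> b \<Longrightarrow> (\<Union>i\<in>{a..<b}. blk r i) = {block_start r a ..< block_start r b}"
proof (induction b rule: dec_induct)
  case base then show ?case by simp
next
  case (step b)
  have "{a..<Suc b} = insert b {a..<b}" using step(1) by auto
  then have "(\<Union>i\<in>{a..<Suc b}. blk r i) = blk r b \<union> {block_start r a ..< block_start r b}" using step(3) by simp
  also have "\<dots> = {block_start r a ..< block_start r (Suc b)}" unfolding blk_def
    using block_start_mono[where i=a and j=b and r=r] block_start_le_Suc[where r=r and i=b] step(1) by auto
  finally show ?case .
qed

lemma length_comp_merge[simp]: "length (comp_merge q r) = length q" unfolding comp_merge_def by simp

lemma comp_merge_nth: "j < length q \<Longrightarrow> comp_merge q r ! j = (\<Sum>i\<in>blk q j. r ! i)"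
  unfolding comp_merge_def by simp

lemma block_start_comp_merge:
  assumes q: "sum_list q = length r"
  shows "j \<le> length q \<Longrightarrow> block_start (comp_merge q r) j = block_start r (block_start q j)"
proof (induction j)
  case 0 then show ?case by simp
next
  case (Suc j)
  then have j: "j < length q" by simp
  have "block_start (comp_merge q r) (Suc j) = block_start (comp_merge q r) j + comp_merge q r ! j" using j by (simp add: block_start_Suc)
  also have "\<dots> = block_start r (block_start q j) + (\<Sum>i\<in>{block_start q j..<block_start q (Suc j)}. r ! i)"
    using Suc j by (simp add: comp_merge_nth blk_def)
  also have "\<dots> = block_start r (block_start q (Suc j))"
    using block_start_telescope[of "block_start q j" "block_start q (Suc j)" r]
      block_start_le_Suc[where r=q and i=j] block_start_le_sum_list[where i="Suc j" and r=q] q by simp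
  finally show ?case .
qed

lemma comp_merge_sum:
  assumes q: "sum_list q = length r"
  shows "sum_list (comp_merge q r) = sum_list r"
proof -
  have "sum_list (comp_merge q r) = block_start (comp_merge q r) (length q)" by simp
  also have "\<dots> = block_start r (block_start q (length q))" using block_start_comp_merge[OF q, of "length q"] by simp
  also have "\<dots> = sum_list r" using q by simp
  finally show ?thesis .
qed

lemma comp_merge_blk:
  assumes q: "sum_list q = length r" and j: "j < length q"
  shows "blk (comp_merge q r) j = (\<Union>i\<in>blk q j. blk r i)" "blk q j \<subseteq> {..<length r}"
proof -
  show "blk (comp_merge q r) j = (\<Union>i\<in>blk q j. blk r i)"
    unfolding blk_def[of "comp_merge q r"] block_start_comp_merge[OF q] block_start_comp_merge[OF q, of "Suc j"]
    using j blk_union[OF block_start_le_Suc[where r=q and i=j], of r] block_start_comp_merge[OF q, of j] block_start_comp_merge[OF q, of "Suc j"]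
    by (simp add: blk_def)
  show "blk q j \<subseteq> {..<length r}" using blk_subset[where r=q and i=j] q by auto
qed

lemma rep_word_merge:
  assumes q: "sum_list q = length r" and l: "length as = length q"
  shows "rep_word r (rep_word q as) = rep_word (comp_merge q r) as"
proof (rule nth_equalityI)
  show "length (rep_word r (rep_word q as)) = length (rep_word (comp_merge q r) as)"
    using comp_merge_sum[OF q] by simp
  fix k assume "k < length (rep_word r (rep_word q as))"
  then have k: "k < sum_list r" by simp
  obtain i where i: "i < length r" "k \<in> blk r i" using blk_cover[OF k] by blast
  have "i < sum_list q" using i q by simp
  then obtain j where j: "j < length q" "i \<in> blk q j" using blk_cover by blast
  have lw: "length (rep_word q as) = length r" using q by simp
  have "rep_word r (rep_word q as) ! k = rep_word q as ! i" using nth_rep_word_blk[OF lw i] .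
  also have "\<dots> = as ! j" using nth_rep_word_blk[OF l j] .
  also have "\<dots> = rep_word (comp_merge q r) as ! k"
  proof -
    have "k \<in> blk (comp_merge q r) j" using comp_merge_blk(1)[OF q j(1)] i j by blast
    then show ?thesis using nth_rep_word_blk[of as "comp_merge q r" j k] l j by simp
  qed
  finally show "rep_word r (rep_word q as) ! k = rep_word (comp_merge q r) as ! k" .
qed

lemma Young_subset_merge:
  assumes q: "sum_list q = length r"
  shows "Young r \<subseteq> Young (comp_merge q r)"
proof (rule Young_subset_coarser)
  show "sum_list (comp_merge q r) = sum_list r" using comp_merge_sum[OF q] .
  fix j assume "j < length (comp_merge q r)"
  then have j: "j < length q" by simp
  show "\<exists>I. blk (comp_merge q r) j = (\<Union>i\<in>I. blk r i) \<and> I \<subseteq> {..<length r}"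
    using comp_merge_blk[OF q j] by blast
qed

context gamma_space begin

lemma Rel_sum_left:
  fixes w :: "'a list"
  assumes "finite D" "\<And>d. d \<in> D \<Longrightarrow> a d \<in> M (length w)"
  shows "free_gen (\<Sum>d\<in>D. a d, w) - (\<Sum>d\<in>D. free_gen (a d, w)) \<in> R"
  using assms
proof (induction D rule: finite_induct)
  case empty
  have "free_gen (0 + 0, w) - free_gen (0, w) - free_gen (0, w) \<in> R" using Rel_add_left zero_in_M by blast
  then have "- free_gen (0, w) \<in> R" by simp
  then have "free_gen (0, w) \<in> R" using Rel_neg by fastforce
  then show ?case by simp
next
  case (insert d D)
  have sM: "(\<Sum>d\<in>D. a d) \<in> M (length w)" using sum_in_M[of D a "length w"] insert by auto
  have g: "free_gen (a d + (\<Sum>d\<in>D. a d), w) - free_gen (a d, w) - free_gen (\<Sum>d\<in>D. a d, w) \<in> R"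
    using Rel_add_left[OF _ sM] insert by simp
  have "free_gen (\<Sum>d\<in>insert d D. a d, w) - (\<Sum>d\<in>insert d D. free_gen (a d, w)) =
     (free_gen (a d + (\<Sum>d\<in>D. a d), w) - free_gen (a d, w) - free_gen (\<Sum>d\<in>D. a d, w)) +
     (free_gen (\<Sum>d\<in>D. a d, w) - (\<Sum>d\<in>D. free_gen (a d, w)))"
    using insert(1,2) by simp
  also have "\<dots> \<in> R" using Rel_add[OF g insert.IH] insert by simp
  finally show ?case .
qed

lemma orbit_gen_coset_sum_Rel:
  assumes Y: "perm_group Y" "perm_group Y'" "Y \<subseteq> Y'" "Y' \<subseteq> Sym n"
    and \<sigma>: "\<sigma> \<in> Sym n" and x: "x \<in> M n" and w: "length w = n"
    and w_fixed: "\<And>\<tau>. \<tau> \<in> Y' \<Longrightarrow> permute_list (inv \<tau>) w = w"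
  shows "orbit_gen n \<sigma> (coset_sum Y' Y (\<lambda>\<tau>. act n \<tau> x)) w -
    coset_sum Y' Y (\<lambda>\<tau>. orbit_gen n (\<sigma> \<circ> \<tau>) x w) \<in> R"
proof -
  have sp: "\<sigma> permutes {0..<n}" using \<sigma> Sym_iff by simp
  have rep: "coset_rep D \<in> Y'" "coset_rep D \<in> Sym n" if "D \<in> lcosets Y' Y" for D
    using coset_rep_in_group[OF Y(2,1,3) that] Y(4) by auto
  have aD: "act n (coset_rep D) x \<in> M n" if "D \<in> lcosets Y' Y" for D
    using act_in_M[OF _ x] rep[OF that] Sym_iff by blast
  have "act n \<sigma> (coset_sum Y' Y (\<lambda>\<tau>. act n \<tau> x)) = (\<Sum>D\<in>lcosets Y' Y. act n \<sigma> (act n (coset_rep D) x))"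
    unfolding coset_sum_eq by (rule act_sum[OF sp finite_lcosets[OF Y(2)] aD])
  then have lhs: "orbit_gen n \<sigma> (coset_sum Y' Y (\<lambda>\<tau>. act n \<tau> x)) w =
      free_gen (\<Sum>D\<in>lcosets Y' Y. act n \<sigma> (act n (coset_rep D) x), permute_list (inv \<sigma>) w)"
    unfolding orbit_gen_def by simp
  have rhs: "coset_sum Y' Y (\<lambda>\<tau>. orbit_gen n (\<sigma> \<circ> \<tau>) x w) =
      (\<Sum>D\<in>lcosets Y' Y. free_gen (act n \<sigma> (act n (coset_rep D) x), permute_list (inv \<sigma>) w))"
    unfolding coset_sum_eq
    by (rule sum.cong[OF refl]) (use orbit_gen_comp[OF \<sigma> _ x w] rep w_fixed in simp)
  show ?thesis unfolding lhs rhs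
    by (rule Rel_sum_left[OF finite_lcosets[OF Y(2)]]) (use act_in_M[OF sp] aD w in auto)
qed

end

context gamma_object begin

lemma beta_of_rep_word:
  assumes x: "x \<in> Minv M act r" and q: "q \<in> Comp (length as) (length r)"
  shows "beta_of act F x r (rep_word q as) =
    beta_of act F (coset_sum (Young (comp_merge q r)) (Young r) (\<lambda>\<sigma>. act (sum_list r) \<sigma> x)) (comp_merge q r) as"
proof -
  have ql: "length q = length as" "sum_list q = length r" using q unfolding Comp_def by auto
  define n where "n = sum_list r"
  define r' where "r' = comp_merge q r"
  define w0 where "w0 = rep_word q as"
  define w where "w = rep_word r w0"
  define y where "y = coset_sum (Young r') (Young r) (\<lambda>\<sigma>. act n \<sigma> x)"
  let ?G = "Sym n" and ?Y = "Young r" and ?Y' = "Young r'"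
  have sr': "sum_list r' = n" unfolding r'_def n_def using comp_merge_sum[OF ql(2)] .
  have ww: "rep_word r' as = w"
    unfolding w_def w0_def r'_def using rep_word_merge[OF ql(2) ql(1)[symmetric]] by simp
  have lw0: "length w0 = length r" unfolding w0_def using ql by simp
  have lw: "length w = n" unfolding w_def n_def by simp
  have YY': "?Y \<subseteq> ?Y'" unfolding r'_def using Young_subset_merge[OF ql(2)] .
  have Y'G: "?Y' \<subseteq> ?G" using Young_subset_Sym[of r'] sr' by simp
  have xM: "x \<in> M n" using Minv_in_M[OF x] n_def by simp
  have w_fixed: "permute_list (inv \<tau>) w = w" if "\<tau> \<in> ?Y'" for \<tau>
    using Young_fixes_rep_word[OF that, of as] ql ww unfolding r'_def by simp
  have "beta_vec y r' as - coset_sum ?G ?Y' (\<lambda>\<sigma>. coset_sum ?Y' ?Y (\<lambda>\<tau>. orbit_gen n (\<sigma> \<circ> \<tau>) x w)) =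
    coset_sum ?G ?Y' (\<lambda>\<sigma>. orbit_gen n \<sigma> y w - coset_sum ?Y' ?Y (\<lambda>\<tau>. orbit_gen n (\<sigma> \<circ> \<tau>) x w))"
    unfolding beta_vec_def sr' ww coset_sum_diff ..
  also have "\<dots> \<in> R" unfolding coset_sum_eq[of ?G ?Y'] y_def
    by (intro Rel_sum orbit_gen_coset_sum_Rel perm_group_Young YY' Y'G xM lw w_fixed
        coset_rep_in_group[OF perm_group_Sym perm_group_Young Y'G])
  also have "coset_sum ?G ?Y' (\<lambda>\<sigma>. coset_sum ?Y' ?Y (\<lambda>\<tau>. orbit_gen n (\<sigma> \<circ> \<tau>) x w)) = beta_vec x r w0"
    unfolding beta_vec_def w_def[symmetric] n_def[symmetric]
    by (rule coset_sum_tower[symmetric, OF perm_group_Sym perm_group_Young Y'G perm_group_Young YY'])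
      (use right_invariant_orbit_gen[OF x lw0] in \<open>simp add: n_def w_def\<close>)
  finally have "F (beta_vec y r' as) = F (beta_vec x r w0)"
    using F_eq_mod_Rel[OF beta_vec_InvA[OF x lw0]] by blast
  then show ?thesis unfolding beta_of_eq y_def r'_def w0_def n_def by simp
qed

end

section \<open>Relation (beta5)\<close>

definition mix_word :: "nat set \<Rightarrow> nat set \<Rightarrow> 'a \<Rightarrow> 'a \<Rightarrow> 'a list \<Rightarrow> 'a list" where
  "mix_word P S a0 a1 v = map (\<lambda>j. if j \<in> S then a0 else if j \<in> P then a1 else v ! j) [0..<length v]"

lemma length_mix_word[simp]: "length (mix_word P S a0 a1 v) = length v"
  unfolding mix_word_def by simp

lemma nth_mix_word:
  "j < length v \<Longrightarrow> mix_word P S a0 a1 v ! j = (if j \<in> S then a0 else if j \<in> P then a1 else v ! j)"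
  unfolding mix_word_def by simp

lemma sum_Pow_insert:
  assumes "finite P" "p \<notin> P"
  shows "(\<Sum>S\<in>Pow (insert p P). f S) = (\<Sum>S\<in>Pow P. f S) + (\<Sum>S\<in>Pow P. f (insert p S))"
proof -
  have "inj_on (insert p) (Pow P)" unfolding inj_on_def using assms(2) by (metis PowD insert_ident subsetD)
  moreover have "(\<Sum>S\<in>Pow (insert p P). f S) = (\<Sum>S\<in>Pow P. f S) + (\<Sum>S\<in>insert p ` Pow P. f S)"
    unfolding Pow_insert by (rule sum.union_disjoint) (use assms in auto)
  ultimately show ?thesis by (simp add: sum.reindex)
qed

context gamma_space begin

lemma Rel_expand_entries:
  fixes v :: "'a list"
  assumes y: "y \<in> M (length v)" and P: "finite P" "P \<subseteq> {..<length v}"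
    and vP: "\<And>j. j \<in> P \<Longrightarrow> v ! j = a0 + a1"
  shows "free_gen (y, v) - (\<Sum>S\<in>Pow P. free_gen (y, mix_word P S a0 a1 v)) \<in> R"
  using P y vP
proof (induction P arbitrary: v rule: finite_induct)
  case empty
  have "mix_word {} {} a0 a1 v = v" by (rule nth_equalityI) (auto simp: nth_mix_word)
  then show ?case using Rel_zero by simp
next
  case (insert p P)
  have p: "p < length v" using insert.prems(1) by simp
  define v0 where "v0 = v[p := a0]"
  define v1 where "v1 = v[p := a1]"
  have l01: "length v0 = length v" "length v1 = length v" unfolding v0_def v1_def by auto
  have IH0: "free_gen (y, v0) - (\<Sum>S\<in>Pow P. free_gen (y, mix_word P S a0 a1 v0)) \<in> R"
    by (rule insert.IH) (use insert.prems insert.hyps l01 in \<open>auto simp: v0_def nth_list_update\<close>)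
  have IH1: "free_gen (y, v1) - (\<Sum>S\<in>Pow P. free_gen (y, mix_word P S a0 a1 v1)) \<in> R"
    by (rule insert.IH) (use insert.prems insert.hyps l01 in \<open>auto simp: v1_def nth_list_update\<close>)
  have "v[p := a0 + a1] = v" using insert.prems(3)[of p] p by (metis insertI1 list_update_id)
  then have split: "free_gen (y, v) - free_gen (y, v0) - free_gen (y, v1) \<in> R"
    using Rel_add_entry[of y v p a0 a1] insert.prems(2) p unfolding v0_def v1_def by simp
  have "mix_word (insert p P) S a0 a1 v = mix_word P S a0 a1 v1" if "S \<in> Pow P" for S
    using that insert.hyps(2) l01 by (intro nth_equalityI) (auto simp: nth_mix_word v1_def nth_list_update)
  moreover have "mix_word (insert p P) (insert p S) a0 a1 v = mix_word P S a0 a1 v0" if "S \<in> Pow P" for S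
    using that insert.hyps(2) l01 by (intro nth_equalityI) (auto simp: nth_mix_word v0_def nth_list_update)
  ultimately have sums: "(\<Sum>S\<in>Pow (insert p P). free_gen (y, mix_word (insert p P) S a0 a1 v)) =
     (\<Sum>S\<in>Pow P. free_gen (y, mix_word P S a0 a1 v1)) + (\<Sum>S\<in>Pow P. free_gen (y, mix_word P S a0 a1 v0))"
    unfolding sum_Pow_insert[OF insert.hyps] by simp
  have "free_gen (y, v) - (\<Sum>S\<in>Pow (insert p P). free_gen (y, mix_word (insert p P) S a0 a1 v)) =
     (free_gen (y, v) - free_gen (y, v0) - free_gen (y, v1)) +
     (free_gen (y, v0) - (\<Sum>S\<in>Pow P. free_gen (y, mix_word P S a0 a1 v0))) +
     (free_gen (y, v1) - (\<Sum>S\<in>Pow P. free_gen (y, mix_word P S a0 a1 v1)))"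
    unfolding sums by (simp add: algebra_simps)
  also have "\<dots> \<in> R" using Rel_add[OF Rel_add[OF split IH0] IH1] .
  finally show ?case .
qed

end

lemma Young_Cons_blk0: "\<tau> \<in> Young (r1 # r) \<Longrightarrow> \<tau> ` {0..<r1} = {0..<r1}"
  using YoungD(2)[of \<tau> "r1 # r" 0] by (simp add: blk_Cons_0)

lemma blk_split_1: "l \<le> r1 \<Longrightarrow> blk (l # (r1 - l) # r) (Suc 0) = {l..<r1}"
  by (simp add: blk_Cons_Suc)

lemma blk_split_Suc_Suc: "l \<le> r1 \<Longrightarrow> blk (l # (r1 - l) # r) (Suc (Suc i)) = blk (r1 # r) (Suc i)"
  by (simp add: blk_Cons_Suc)

lemma Young_split_subset:
  assumes l: "l \<le> r1"
  shows "Young (l # (r1 - l) # r) \<subseteq> Young (r1 # r)"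
proof (rule Young_subset_coarser)
  show "sum_list (r1 # r) = sum_list (l # (r1 - l) # r)" using l by simp
  fix i' assume i': "i' < length (r1 # r)"
  show "\<exists>I. blk (r1 # r) i' = (\<Union>i\<in>I. blk (l # (r1 - l) # r) i) \<and> I \<subseteq> {..<length (l # (r1 - l) # r)}"
  proof (cases i')
    case 0
    have "blk (r1 # r) i' = (\<Union>i\<in>{0, Suc 0}. blk (l # (r1 - l) # r) i)"
      using 0 l by (auto simp: blk_Cons_0 blk_split_1)
    then show ?thesis by (intro exI[of _ "{0, Suc 0}"]) auto
  next
    case (Suc i)
    have "blk (r1 # r) i' = (\<Union>i\<in>{Suc (Suc i)}. blk (l # (r1 - l) # r) i)"
      using Suc l by (simp add: blk_split_Suc_Suc)
    then show ?thesis using i' Suc by (intro exI[of _ "{Suc (Suc i)}"]) auto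
  qed
qed

lemma Young_splitI:
  assumes l: "l \<le> r1" and \<rho>: "\<rho> \<in> Young (r1 # r)" and \<rho>l: "\<rho> ` {0..<l} = {0..<l}"
  shows "\<rho> \<in> Young (l # (r1 - l) # r)"
  unfolding Young_def
proof (intro CollectI conjI allI impI)
  show "\<rho> permutes {0..<sum_list (l # (r1 - l) # r)}" using YoungD(1)[OF \<rho>] l by simp
  have inj: "inj \<rho>" using YoungD(1)[OF \<rho>] permutes_inj by blast
  fix i assume i: "i < length (l # (r1 - l) # r)"
  show "\<rho> ` blk (l # (r1 - l) # r) i = blk (l # (r1 - l) # r) i"
  proof (cases i)
    case 0 then show ?thesis using \<rho>l by (simp add: blk_Cons_0)
  next
    case (Suc i')
    show ?thesis
    proof (cases i')
      case 0
      have e: "{l..<r1} = {0..<r1} - {0..<l}" by auto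
      have "\<rho> ` {l..<r1} = \<rho> ` {0..<r1} - \<rho> ` {0..<l}" unfolding e by (rule image_set_diff[OF inj])
      then show ?thesis using Suc 0 l Young_Cons_blk0[OF \<rho>] \<rho>l blk_split_1[OF l] by auto
    next
      case (Suc i'')
      then show ?thesis using \<open>i = Suc i'\<close> i YoungD(2)[OF \<rho>, of "Suc i''"] blk_split_Suc_Suc[OF l] by simp
    qed
  qed
qed

lemma obtain_block_perm:
  assumes l: "l \<le> r1" and S: "S \<subseteq> {0..<r1}" "card S = l" and n: "r1 \<le> n"
  obtains \<tau> where "\<tau> permutes {0..<n}" "\<tau> ` {0..<l} = S" "\<tau> ` {0..<r1} = {0..<r1}" "\<And>j. r1 \<le> j \<Longrightarrow> \<tau> j = j"
proof -
  have fS: "finite S" using S(1) finite_subset by blast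
  obtain g1 where g1: "bij_betw g1 {0..<l} S" using finite_same_card_bij[of "{0..<l}" S] fS S(2) by auto
  have c2: "card ({0..<r1} - S) = card {l..<r1}" using S card_Diff_subset[OF fS S(1)] by simp
  obtain g2 where g2: "bij_betw g2 {l..<r1} ({0..<r1} - S)"
    using finite_same_card_bij[of "{l..<r1}" "{0..<r1} - S"] c2 by auto
  define \<tau> where "\<tau> j = (if j < l then g1 j else if j < r1 then g2 j else j)" for j
  have t1: "bij_betw \<tau> {0..<l} S" using g1 unfolding \<tau>_def by (rule bij_betw_cong[THEN iffD1, rotated]) auto
  have t2: "bij_betw \<tau> {l..<r1} ({0..<r1} - S)" using g2 unfolding \<tau>_def
    by (rule bij_betw_cong[THEN iffD1, rotated]) auto
  have t12: "bij_betw \<tau> ({0..<l} \<union> {l..<r1}) (S \<union> ({0..<r1} - S))"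
    by (rule bij_betw_combine[OF t1 t2]) auto
  have e1: "{0..<l} \<union> {l..<r1} = {0..<r1}" "S \<union> ({0..<r1} - S) = {0..<r1}" using l S(1) by auto
  have t0: "bij_betw \<tau> {0..<r1} {0..<r1}" using t12 unfolding e1 .
  have t3: "bij_betw \<tau> {r1..<n} {r1..<n}" unfolding \<tau>_def using l by (simp add: bij_betw_def inj_on_def)
  have t4: "bij_betw \<tau> ({0..<r1} \<union> {r1..<n}) ({0..<r1} \<union> {r1..<n})"
    by (rule bij_betw_combine[OF t0 t3]) auto
  have e2: "{0..<r1} \<union> {r1..<n} = {0..<n}" using n by auto
  have "\<tau> permutes {0..<n}"
    by (rule bij_imp_permutes) (use t4 e2 l in \<open>auto simp: \<tau>_def\<close>)
  moreover have "\<tau> ` {0..<l} = S" using t1 bij_betw_imp_surj_on by blast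
  moreover have "\<tau> ` {0..<r1} = {0..<r1}" using t0 bij_betw_imp_surj_on by blast
  moreover have "\<And>j. r1 \<le> j \<Longrightarrow> \<tau> j = j" unfolding \<tau>_def using l by auto
  ultimately show ?thesis using that by blast
qed

lemma Young_Cons_fixing_tail:
  assumes "\<tau> permutes {0..<sum_list (r1 # r)}" "\<tau> ` {0..<r1} = {0..<r1}" "\<And>j. r1 \<le> j \<Longrightarrow> \<tau> j = j"
  shows "\<tau> \<in> Young (r1 # r)"
  unfolding Young_def
proof (intro CollectI conjI allI impI)
  fix i assume "i < length (r1 # r)"
  show "\<tau> ` blk (r1 # r) i = blk (r1 # r) i"
  proof (cases i)
    case (Suc i')
    then have "\<forall>j\<in>blk (r1 # r) i. \<tau> j = j" using assms(3) by (auto simp: blk_Cons_Suc)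
    then show ?thesis by simp
  qed (use assms(2) in \<open>simp add: blk_Cons_0\<close>)
qed (rule assms(1))

lemma lcosets_split_inj:
  assumes l: "l \<le> r1"
    and D: "D \<in> lcosets (Young (r1 # r)) (Young (l # (r1 - l) # r))"
    and D': "D' \<in> lcosets (Young (r1 # r)) (Young (l # (r1 - l) # r))"
    and eq: "coset_rep D ` {0..<l} = coset_rep D' ` {0..<l}"
  shows "D = D'"
proof -
  let ?Y = "Young (r1 # r)" and ?Yl = "Young (l # (r1 - l) # r)" and ?a = "coset_rep D" and ?b = "coset_rep D'"
  have rep: "?a \<in> ?Y" "?b \<in> ?Y"
    using coset_rep_in_group[OF perm_group_Young perm_group_Young Young_split_subset[OF l]] D D' by auto
  have bij: "bij ?a" using perm_groupD(4)[OF perm_group_Young rep(1)] .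
  have "(inv ?a \<circ> ?b) ` {0..<l} = inv ?a ` (?a ` {0..<l})" unfolding image_comp[symmetric] eq ..
  also have "\<dots> = {0..<l}" using bij by (simp add: bij_is_inj image_comp bij_inv_comp)
  finally have "(inv ?a \<circ> ?b) ` {0..<l} = {0..<l}" .
  moreover have "inv ?a \<circ> ?b \<in> ?Y" using perm_groupD(3,5)[OF perm_group_Young] rep by blast
  ultimately have "inv ?a \<circ> ?b \<in> ?Yl" using Young_splitI[OF l] by blast
  then have "lcoset ?a ?Yl = lcoset ?b ?Yl" using lcoset_eq_iff[OF perm_group_Young bij] by simp
  then show "D = D'" using lcoset_coset_rep[OF perm_group_Young D] lcoset_coset_rep[OF perm_group_Young D'] by simp
qed

lemma bij_betw_lcosets_subsets:
  assumes l: "l \<le> r1"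
  shows "bij_betw (\<lambda>D. coset_rep D ` {0..<l}) (lcosets (Young (r1 # r)) (Young (l # (r1 - l) # r)))
           {S. S \<subseteq> {0..<r1} \<and> card S = l}"
proof (rule bij_betwI')
  let ?Y = "Young (r1 # r)" and ?Yl = "Young (l # (r1 - l) # r)"
  fix D D' assume "D \<in> lcosets ?Y ?Yl" "D' \<in> lcosets ?Y ?Yl"
  then show "(coset_rep D ` {0..<l} = coset_rep D' ` {0..<l}) = (D = D')"
    using lcosets_split_inj[OF l] by blast
next
  let ?Y = "Young (r1 # r)" and ?Yl = "Young (l # (r1 - l) # r)"
  fix D assume D: "D \<in> lcosets ?Y ?Yl"
  have a: "coset_rep D \<in> ?Y"
    using coset_rep_in_group[OF perm_group_Young perm_group_Young Young_split_subset[OF l] D] .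
  have "coset_rep D ` {0..<l} \<subseteq> coset_rep D ` {0..<r1}" using l by auto
  then have "coset_rep D ` {0..<l} \<subseteq> {0..<r1}" using Young_Cons_blk0[OF a] by simp
  moreover have "card (coset_rep D ` {0..<l}) = l"
    using card_image[OF inj_on_subset[OF bij_is_inj[OF perm_groupD(4)[OF perm_group_Young a]] subset_UNIV]]
    by simp
  ultimately show "coset_rep D ` {0..<l} \<in> {S. S \<subseteq> {0..<r1} \<and> card S = l}" by simp
next
  let ?Y = "Young (r1 # r)" and ?Yl = "Young (l # (r1 - l) # r)"
  fix S assume "S \<in> {S. S \<subseteq> {0..<r1} \<and> card S = l}"
  then have S: "S \<subseteq> {0..<r1}" "card S = l" by auto
  obtain \<tau> where \<tau>: "\<tau> permutes {0..<sum_list (r1 # r)}" "\<tau> ` {0..<l} = S" "\<tau> ` {0..<r1} = {0..<r1}"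
      "\<And>j. r1 \<le> j \<Longrightarrow> \<tau> j = j"
    using obtain_block_perm[OF l S, of "sum_list (r1 # r)"] by auto
  define D where "D = lcoset \<tau> ?Yl"
  have D: "D \<in> lcosets ?Y ?Yl" unfolding D_def by (rule lcoset_in_lcosets, rule Young_Cons_fixing_tail[OF \<tau>(1,3,4)])
  have "coset_rep D \<in> lcoset \<tau> ?Yl" using coset_rep_in[OF perm_group_Young D] D_def by simp
  then obtain h where h: "h \<in> ?Yl" "coset_rep D = \<tau> \<circ> h" unfolding lcoset_def by auto
  have "h ` {0..<l} = {0..<l}" using YoungD(2)[OF h(1), of 0] by (simp add: blk_Cons_0)
  then have "coset_rep D ` {0..<l} = S" using h(2) \<tau>(2) by (metis image_comp)
  then show "\<exists>D\<in>lcosets ?Y ?Yl. S = coset_rep D ` {0..<l}" using D by blast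
qed

lemma permute_split_rep_word:
  assumes \<tau>: "\<tau> \<in> Young (r1 # r)" and las: "length as = length r" and l: "l \<le> r1"
  shows "permute_list (inv \<tau>) (rep_word (l # (r1 - l) # r) (a0 # a1 # as)) =
         mix_word {0..<r1} (\<tau> ` {0..<l}) a0 a1 (replicate r1 b @ rep_word r as)"
    (is "?lhs = ?rhs")
proof -
  define u where "u = rep_word r as"
  let ?n = "r1 + sum_list r"
  have sp: "\<tau> permutes {0..<?n}" using YoungD(1)[OF \<tau>] by simp
  have wl: "rep_word (l # (r1 - l) # r) (a0 # a1 # as) = replicate l a0 @ replicate (r1 - l) a1 @ u"
    unfolding u_def using las by (simp add: rep_word_Cons)
  have fixed: "permute_list (inv \<tau>) (replicate r1 b @ u) = replicate r1 b @ u"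
    using Young_fixes_rep_word[OF \<tau>, of "b # as"] las unfolding u_def by (simp add: rep_word_Cons)
  have lu: "length u = sum_list r" unfolding u_def by simp
  show ?thesis
  proof (rule nth_equalityI)
    show "length ?lhs = length ?rhs" using l lu wl u_def by simp
    fix j assume "j < length ?lhs"
    then have j: "j < ?n" using l by simp
    define k where "k = inv \<tau> j"
    have k: "k < ?n" unfolding k_def using permutes_less[OF permutes_inv[OF sp] j] .
    have in_l: "j \<in> \<tau> ` {0..<l} \<longleftrightarrow> k < l"
      using bij_image_mem_iff[OF permutes_bij[OF sp]] unfolding k_def by simp
    have in_r1: "k < r1 \<longleftrightarrow> j < r1"
      using bij_image_mem_iff[OF permutes_bij[OF sp], of j "{0..<r1}"] Young_Cons_blk0[OF \<tau>]
      unfolding k_def by simp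
    have lhs: "?lhs ! j = (replicate l a0 @ replicate (r1 - l) a1 @ u) ! k"
      unfolding wl permute_list_def k_def using j lu l by simp
    show "?lhs ! j = ?rhs ! j"
    proof (cases "j < r1")
      case True
      then show ?thesis unfolding lhs u_def[symmetric] using in_l in_r1 j lu l
        by (auto simp: nth_mix_word nth_append)
    next
      case False
      have "(replicate r1 b @ u) ! k = (replicate r1 b @ u) ! j"
        using arg_cong[OF fixed, of "\<lambda>xs. xs ! j"] j lu unfolding permute_list_def k_def by simp
      then have "u ! (k - r1) = u ! (j - r1)" using False in_r1 by (simp add: nth_append)
      then show ?thesis unfolding lhs u_def[symmetric] using False in_l in_r1 j lu l
        by (auto simp: nth_mix_word nth_append)
    qed
  qed
qed

lemma sum_subsets_mix_word:
  assumes las: "length as = length r" and l: "l \<le> r1"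
  shows "(\<Sum>S | S \<subseteq> {0..<r1} \<and> card S = l. g (mix_word {0..<r1} S a0 a1 (replicate r1 b @ rep_word r as))) =
    coset_sum (Young (r1 # r)) (Young (l # (r1 - l) # r))
      (\<lambda>\<tau>. g (permute_list (inv \<tau>) (rep_word (l # (r1 - l) # r) (a0 # a1 # as))))"
proof -
  let ?Y = "Young (r1 # r)" and ?Yl = "Young (l # (r1 - l) # r)"
  have "(\<Sum>S | S \<subseteq> {0..<r1} \<and> card S = l. g (mix_word {0..<r1} S a0 a1 (replicate r1 b @ rep_word r as))) =
      (\<Sum>D\<in>lcosets ?Y ?Yl. g (mix_word {0..<r1} (coset_rep D ` {0..<l}) a0 a1 (replicate r1 b @ rep_word r as)))"
    by (rule sum.reindex_bij_betw[OF bij_betw_lcosets_subsets[OF l], symmetric])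
  also have "\<dots> = coset_sum ?Y ?Yl (\<lambda>\<tau>. g (permute_list (inv \<tau>) (rep_word (l # (r1 - l) # r) (a0 # a1 # as))))"
    unfolding coset_sum_eq
    using coset_rep_in_group[OF perm_group_Young perm_group_Young Young_split_subset[OF l]]
      permute_split_rep_word[OF _ las l]
    by (intro sum.cong) simp_all
  finally show ?thesis .
qed

context gamma_space begin

text \<open>Expanding the first r1 letters multilinearly gives a sum over the subsets S of
  {0..<r1}; grouped by the size l of S, these subsets are the left cosets of
  Young (l # (r1 - l) # r) in Young (r1 # r).\<close>

lemma Rel_expand_block:
  fixes as :: "'a list"
  assumes x: "x \<in> M (r1 + sum_list r)" and las: "length as = length r"
  shows "free_gen (x, replicate r1 (a0 + a1) @ rep_word r as) -
     (\<Sum>l\<in>{0..r1}. coset_sum (Young (r1 # r)) (Young (l # (r1 - l) # r))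
        (\<lambda>\<tau>. free_gen (x, permute_list (inv \<tau>) (rep_word (l # (r1 - l) # r) (a0 # a1 # as))))) \<in> R"
proof -
  define w where "w = replicate r1 (a0 + a1) @ rep_word r as"
  let ?f = "\<lambda>S. free_gen (x, mix_word {0..<r1} S a0 a1 w) :: 'm \<times> 'a list \<Rightarrow> 'k"
  have lw: "length w = r1 + sum_list r" unfolding w_def by simp
  have "free_gen (x, w) - (\<Sum>S\<in>Pow {0..<r1}. ?f S) \<in> R"
    by (rule Rel_expand_entries) (use x in \<open>auto simp: lw w_def nth_append\<close>)
  moreover have "(\<Sum>S\<in>Pow {0..<r1}. ?f S) = (\<Sum>l\<in>{0..r1}. \<Sum>S\<in>{S \<in> Pow {0..<r1}. card S = l}. ?f S)"
    by (rule sum.group[symmetric]) (use card_mono[of "{0..<r1}"] in fastforce)+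
  moreover have "{S \<in> Pow {0..<r1}. card S = l} = {S. S \<subseteq> {0..<r1} \<and> card S = l}" for l
    by auto
  moreover have "(\<Sum>l\<in>{0..r1}. \<Sum>S | S \<subseteq> {0..<r1} \<and> card S = l. ?f S) =
      (\<Sum>l\<in>{0..r1}. coset_sum (Young (r1 # r)) (Young (l # (r1 - l) # r))
        (\<lambda>\<tau>. free_gen (x, permute_list (inv \<tau>) (rep_word (l # (r1 - l) # r) (a0 # a1 # as)))))"
    unfolding w_def by (intro sum.cong refl sum_subsets_mix_word[OF las]) simp
  ultimately show ?thesis unfolding w_def by simp
qed

lemma push_gen_act_coset_sum:
  assumes Y: "perm_group Y" "perm_group Y'" "Y' \<subseteq> Y" "Y \<subseteq> Sym n" and \<sigma>: "\<sigma> \<in> Sym n"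
    and x: "x \<in> M n" "\<And>\<tau>. \<tau> \<in> Y \<Longrightarrow> act n \<tau> x = x" and w: "length w = n"
  shows "push (gen_act act n \<sigma>) (coset_sum Y Y' (\<lambda>\<tau>. free_gen (x, permute_list (inv \<tau>) w))) =
    coset_sum Y Y' (\<lambda>\<tau>. orbit_gen n (\<sigma> \<circ> \<tau>) x w)"
proof -
  have rep: "coset_rep D \<in> Y" if "D \<in> lcosets Y Y'" for D
    using coset_rep_in_group[OF Y(1-3) that] .
  have "free_gen (x, permute_list (inv (coset_rep D)) w) = orbit_gen n (coset_rep D) x w"
    if "D \<in> lcosets Y Y'" for D
    unfolding orbit_gen_def using x(2) rep[OF that] by simp
  then show ?thesis
    unfolding coset_sum_eq using push_gen_act_orbit_gen[OF \<sigma> _ x(1) w] rep Y(4)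
    by (simp add: push_sum finite_lcosets[OF Y(1)] finite_fsupp_orbit_gen subset_iff)
qed

lemma orbit_gen_expand_block_Rel:
  fixes as :: "'a list"
  assumes x: "x \<in> Minv M act (r1 # r)" and las: "length as = length r" and \<sigma>: "\<sigma> \<in> Sym (r1 + sum_list r)"
  shows "orbit_gen (r1 + sum_list r) \<sigma> x (replicate r1 (a0 + a1) @ rep_word r as) -
     (\<Sum>l\<in>{0..r1}. coset_sum (Young (r1 # r)) (Young (l # (r1 - l) # r))
        (\<lambda>\<tau>. orbit_gen (r1 + sum_list r) (\<sigma> \<circ> \<tau>) x (rep_word (l # (r1 - l) # r) (a0 # a1 # as)))) \<in> R"
proof -
  let ?n = "r1 + sum_list r" and ?Y = "Young (r1 # r)"
  have xM: "x \<in> M ?n" using Minv_in_M[OF x] by simp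
  have x_fixed: "act ?n \<tau> x = x" if "\<tau> \<in> ?Y" for \<tau> using x that unfolding Minv_iff by simp
  have sp: "\<sigma> permutes {0..<?n}" using \<sigma> Sym_iff by simp
  let ?E = "free_gen (x, replicate r1 (a0 + a1) @ rep_word r as) -
     (\<Sum>l\<in>{0..r1}. coset_sum ?Y (Young (l # (r1 - l) # r))
        (\<lambda>\<tau>. free_gen (x, permute_list (inv \<tau>) (rep_word (l # (r1 - l) # r) (a0 # a1 # as)))))"
  have fin: "finite (fsupp (coset_sum ?Y Y' (\<lambda>\<tau>. free_gen (x, permute_list (inv \<tau>) w)) :: 'm \<times> 'a list \<Rightarrow> 'k))"
    for Y' and w :: "'a list"
    unfolding coset_sum_eq by (simp add: finite_fsupp_sum finite_lcosets perm_group_Young)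
  have "push (gen_act act ?n \<sigma>) ?E \<in> R"
    using push_gen_act_Rel[OF sp Rel_expand_block[OF xM las]] .
  moreover have "push (gen_act act ?n \<sigma>) (free_gen (x, replicate r1 (a0 + a1) @ rep_word r as)) =
      orbit_gen ?n \<sigma> x (replicate r1 (a0 + a1) @ rep_word r as)"
    unfolding orbit_gen_def push_free_gen by (simp add: gen_act_length)
  moreover have "push (gen_act act ?n \<sigma>) (coset_sum ?Y (Young (l # (r1 - l) # r))
        (\<lambda>\<tau>. free_gen (x, permute_list (inv \<tau>) (rep_word (l # (r1 - l) # r) (a0 # a1 # as))))) =
      coset_sum ?Y (Young (l # (r1 - l) # r))
        (\<lambda>\<tau>. orbit_gen ?n (\<sigma> \<circ> \<tau>) x (rep_word (l # (r1 - l) # r) (a0 # a1 # as)))"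
    if "l \<in> {0..r1}" for l
    using that Young_subset_Sym[of "r1 # r"] x_fixed \<sigma> xM
    by (intro push_gen_act_coset_sum perm_group_Young Young_split_subset) auto
  ultimately show ?thesis by (simp add: push_diff push_sum fin finite_fsupp_sum)
qed

end

context gamma_object begin

lemma beta_of_add:
  fixes as :: "'a list"
  assumes x: "x \<in> Minv M act (r1 # r)" and las: "length as = length r"
  shows "beta_of act F x (r1 # r) ((a0 + a1) # as) =
    (\<Sum>l\<in>{0..r1}. beta_of act F x (l # (r1 - l) # r) (a0 # a1 # as))"
proof -
  let ?n = "r1 + sum_list r" and ?G = "Sym (r1 + sum_list r)" and ?Y = "Young (r1 # r)"
  define Yl where "Yl l = Young (l # (r1 - l) # r)" for l
  define wl where "wl l = rep_word (l # (r1 - l) # r) (a0 # a1 # as)" for l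
  have sl: "sum_list (l # (r1 - l) # r) = ?n" if "l \<in> {0..r1}" for l using that by simp
  have YG: "?Y \<subseteq> ?G" using Young_subset_Sym[of "r1 # r"] by simp
  have YlY: "Yl l \<subseteq> ?Y" if "l \<in> {0..r1}" for l using Young_split_subset[of l r1 r] that Yl_def by simp
  have xl: "x \<in> Minv M act (l # (r1 - l) # r)" if l: "l \<in> {0..r1}" for l
    using x YlY[OF l] unfolding Minv_iff sl[OF l] Yl_def by auto
  have las': "length (a0 # a1 # as) = length (l # (r1 - l) # r)" for l using las by simp
  have split: "beta_vec x (l # (r1 - l) # r) (a0 # a1 # as) =
      coset_sum ?G ?Y (\<lambda>\<sigma>. coset_sum ?Y (Yl l) (\<lambda>\<tau>. orbit_gen ?n (\<sigma> \<circ> \<tau>) x (wl l)))"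
    if l: "l \<in> {0..r1}" for l
    unfolding beta_vec_def sl[OF l] Yl_def[symmetric] wl_def[symmetric]
    by (rule coset_sum_tower[OF perm_group_Sym perm_group_Young YG _ YlY[OF l]])
      (use right_invariant_orbit_gen[OF xl[OF l] las'[of l]] sl[OF l] in \<open>simp_all add: Yl_def wl_def perm_group_Young\<close>)
  have "beta_vec x (r1 # r) ((a0 + a1) # as) - (\<Sum>l\<in>{0..r1}. beta_vec x (l # (r1 - l) # r) (a0 # a1 # as)) =
      coset_sum ?G ?Y (\<lambda>\<sigma>. orbit_gen ?n \<sigma> x (replicate r1 (a0 + a1) @ rep_word r as) -
        (\<Sum>l\<in>{0..r1}. coset_sum ?Y (Yl l) (\<lambda>\<tau>. orbit_gen ?n (\<sigma> \<circ> \<tau>) x (wl l))))"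
    unfolding coset_sum_diff coset_sum_sum[OF finite_atLeastAtMost] using split las
    by (simp add: beta_vec_def rep_word_Cons)
  also have "\<dots> \<in> R" unfolding coset_sum_eq[of ?G ?Y] Yl_def wl_def
    by (intro Rel_sum orbit_gen_expand_block_Rel[OF x las] coset_rep_in_group[OF perm_group_Sym perm_group_Young YG])
  finally have d: "beta_vec x (r1 # r) ((a0 + a1) # as) -
      (\<Sum>l\<in>{0..r1}. beta_vec x (l # (r1 - l) # r) (a0 # a1 # as)) \<in> R" .
  have iv: "beta_vec x (l # (r1 - l) # r) (a0 # a1 # as) \<in> InvA" if "l \<in> {0..r1}" for l
    using beta_vec_InvA[OF xl[OF that] las'] .
  have "F (beta_vec x (r1 # r) ((a0 + a1) # as)) = F (\<Sum>l\<in>{0..r1}. beta_vec x (l # (r1 - l) # r) (a0 # a1 # as))"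
    by (rule F_eq_mod_Rel[OF InvA_sum[OF finite_atLeastAtMost iv] d])
  also have "\<dots> = (\<Sum>l\<in>{0..r1}. F (beta_vec x (l # (r1 - l) # r) (a0 # a1 # as)))"
    by (rule F_sum[OF finite_atLeastAtMost iv])
  finally show ?thesis unfolding beta_of_eq .
qed

end

section \<open>Relation (beta1)\<close>

lemma length_comp_perm[simp]: "length (comp_perm \<rho> r) = length r"
  unfolding comp_perm_def by simp

lemma sum_list_comp_perm:
  assumes "\<rho> permutes {0..<length r}"
  shows "sum_list (comp_perm \<rho> (r :: nat list)) = sum_list r"
proof -
  have "inv \<rho> permutes {..<length r}" using permutes_inv[OF assms] by (simp add: atLeast0LessThan)
  then have "mset (comp_perm \<rho> r) = mset r" unfolding comp_perm_def by simp
  then show ?thesis by (metis sum_mset_sum_list)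
qed

lemma comp_perm_nth:
  assumes "\<rho> permutes {0..<length r}" "i < length r"
  shows "comp_perm \<rho> r ! (\<rho> i) = r ! i"
  using permute_list_inv_at[OF assms] unfolding comp_perm_def .

lemma comp_perm_nth':
  assumes "\<rho> permutes {0..<length r}" "i' < length r"
  shows "comp_perm \<rho> r ! i' = r ! (inv \<rho> i')"
  using assms unfolding comp_perm_def permute_list_def by simp

lemma the_blk_index: "i < length r \<Longrightarrow> j \<in> blk r i \<Longrightarrow> (THE i. i < length r \<and> j \<in> blk r i) = i"
  by (rule the_equality) (auto intro: blk_unique)

lemma block_perm_blk:
  assumes "i < length r" "j \<in> blk r i"
  shows "block_perm r \<rho> j = block_start (comp_perm \<rho> r) (\<rho> i) + (j - block_start r i)"
proof -
  have "j < sum_list r" using blk_subset[of r i] assms(2) by auto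
  then show ?thesis unfolding block_perm_def using the_blk_index[OF assms] by (simp add: Let_def)
qed

lemma block_perm_out: "\<not> j < sum_list r \<Longrightarrow> block_perm r \<rho> j = j"
  unfolding block_perm_def by simp

lemma block_perm_image:
  assumes \<rho>: "\<rho> permutes {0..<length r}" and i: "i < length r"
  shows "block_perm r \<rho> ` blk r i = blk (comp_perm \<rho> r) (\<rho> i)"
proof -
  let ?a = "block_start r i" and ?b = "block_start (comp_perm \<rho> r) (\<rho> i)" and ?m = "r ! i"
  have ri: "\<rho> i < length r" using permutes_less[OF \<rho> i] .
  have B1: "blk r i = {?a ..< ?a + ?m}" unfolding blk_def using i by (simp add: block_start_Suc)
  have B2: "blk (comp_perm \<rho> r) (\<rho> i) = {?b ..< ?b + ?m}" unfolding blk_def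
    using ri comp_perm_nth[OF \<rho> i] by (simp add: block_start_Suc)
  have "block_perm r \<rho> ` blk r i = (\<lambda>j. ?b + (j - ?a)) ` {?a ..< ?a + ?m}"
    unfolding B1 using block_perm_blk[OF i] B1 by (intro image_cong) auto
  also have "\<dots> = {?b ..< ?b + ?m}"
  proof
    show "(\<lambda>j. ?b + (j - ?a)) ` {?a ..< ?a + ?m} \<subseteq> {?b ..< ?b + ?m}" by auto
    show "{?b ..< ?b + ?m} \<subseteq> (\<lambda>j. ?b + (j - ?a)) ` {?a ..< ?a + ?m}"
    proof
      fix k assume k: "k \<in> {?b ..< ?b + ?m}"
      then have "k = ?b + ((?a + (k - ?b)) - ?a)" "?a + (k - ?b) \<in> {?a ..< ?a + ?m}" by auto
      then show "k \<in> (\<lambda>j. ?b + (j - ?a)) ` {?a ..< ?a + ?m}" by blast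
    qed
  qed
  finally show ?thesis using B2 by simp
qed

lemma block_perm_permutes:
  assumes \<rho>: "\<rho> permutes {0..<length r}"
  shows "block_perm r \<rho> permutes {0..<sum_list r}"
proof -
  let ?\<pi> = "block_perm r \<rho>" and ?r = "comp_perm \<rho> r" and ?n = "sum_list r"
  have sr: "sum_list ?r = ?n" using sum_list_comp_perm[OF \<rho>] .
  have into: "?\<pi> ` {0..<?n} \<subseteq> {0..<?n}"
  proof
    fix k assume "k \<in> ?\<pi> ` {0..<?n}"
    then obtain j where j: "j < ?n" "k = ?\<pi> j" by auto
    obtain i where i: "i < length r" "j \<in> blk r i" using blk_cover[OF j(1)] by blast
    have "k \<in> blk ?r (\<rho> i)" using block_perm_image[OF \<rho> i(1)] i(2) j(2) by blast
    then show "k \<in> {0..<?n}" using blk_subset[of ?r "\<rho> i"] sr by auto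
  qed
  have inj: "inj_on ?\<pi> {0..<?n}"
  proof (rule inj_onI)
    fix j j' assume j: "j \<in> {0..<?n}" and j': "j' \<in> {0..<?n}" and e: "?\<pi> j = ?\<pi> j'"
    obtain i where i: "i < length r" "j \<in> blk r i" using blk_cover[of j r] j by auto
    obtain i' where i': "i' < length r" "j' \<in> blk r i'" using blk_cover[of j' r] j' by auto
    have "?\<pi> j \<in> blk ?r (\<rho> i)" using block_perm_image[OF \<rho> i(1)] i(2) by blast
    moreover have "?\<pi> j \<in> blk ?r (\<rho> i')" using block_perm_image[OF \<rho> i'(1)] i'(2) e by (metis imageI)
    ultimately have "\<rho> i = \<rho> i'"
      using blk_unique[of "\<rho> i" ?r "\<rho> i'"] permutes_less[OF \<rho>] i(1) i'(1) by simp
    then have ii: "i = i'" using permutes_inj[OF \<rho>] by (meson injD)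
    show "j = j'" using e block_perm_blk[OF i] block_perm_blk[OF i'] unfolding ii
      using i(2) i'(2) ii unfolding blk_def by auto
  qed
  have "?\<pi> ` {0..<?n} = {0..<?n}" using endo_inj_surj[OF _ into inj] by simp
  then have "bij_betw ?\<pi> {0..<?n} {0..<?n}" using inj by (simp add: bij_betw_def)
  then show ?thesis by (rule bij_imp_permutes) (simp add: block_perm_out)
qed

lemma bij_inv_image_image: "bij f \<Longrightarrow> inv f ` (f ` B) = B"
  by (simp add: bij_is_inj image_comp bij_inv_comp)

lemma block_perm_inv_blk:
  assumes \<rho>: "\<rho> permutes {0..<length r}" and i: "i < length r" and k: "k \<in> blk (comp_perm \<rho> r) (\<rho> i)"
  shows "inv (block_perm r \<rho>) k \<in> blk r i"
proof -
  have bp: "bij (block_perm r \<rho>)" using permutes_bij[OF block_perm_permutes[OF \<rho>]] .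
  have "inv (block_perm r \<rho>) k \<in> inv (block_perm r \<rho>) ` (block_perm r \<rho> ` blk r i)"
    using k block_perm_image[OF \<rho> i] by simp
  then show ?thesis using bij_inv_image_image[OF bp] by simp
qed

lemma permute_list_block_perm:
  assumes \<rho>: "\<rho> permutes {0..<length r}" and l: "length as = length r"
  shows "permute_list (inv (block_perm r \<rho>)) (rep_word r as) = rep_word (comp_perm \<rho> r) (comp_perm \<rho> as)"
proof (rule nth_equalityI)
  let ?r = "comp_perm \<rho> r"
  have sr: "sum_list ?r = sum_list r" using sum_list_comp_perm[OF \<rho>] .
  show "length (permute_list (inv (block_perm r \<rho>)) (rep_word r as)) = length (rep_word ?r (comp_perm \<rho> as))"
    using sr by simp
  fix k assume "k < length (permute_list (inv (block_perm r \<rho>)) (rep_word r as))"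
  then have k: "k < sum_list ?r" using sr by simp
  obtain i' where i': "i' < length ?r" "k \<in> blk ?r i'" using blk_cover[OF k] by blast
  define i where "i = inv \<rho> i'"
  have ii: "\<rho> i = i'" unfolding i_def using permutes_inverses(1)[OF \<rho>] by simp
  have i: "i < length r" unfolding i_def using permutes_less[OF permutes_inv[OF \<rho>]] i'(1) by simp
  have kk: "inv (block_perm r \<rho>) k \<in> blk r i" using block_perm_inv_blk[OF \<rho> i] i'(2) ii by simp
  have "permute_list (inv (block_perm r \<rho>)) (rep_word r as) ! k = rep_word r as ! (inv (block_perm r \<rho>) k)"
    using k sr unfolding permute_list_def by simp
  also have "\<dots> = as ! i" using nth_rep_word_blk[OF l i kk] .
  also have "\<dots> = comp_perm \<rho> as ! i'" using comp_perm_nth'[of \<rho> as i'] \<rho> l i'(1) i_def by simp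
  also have "\<dots> = rep_word ?r (comp_perm \<rho> as) ! k" using nth_rep_word_blk[of "comp_perm \<rho> as" ?r i' k] l i' by simp
  finally show "permute_list (inv (block_perm r \<rho>)) (rep_word r as) ! k = rep_word ?r (comp_perm \<rho> as) ! k" .
qed

lemma Young_conj_block_perm:
  assumes \<rho>: "\<rho> permutes {0..<length r}" and \<tau>: "\<tau> \<in> Young r"
  shows "block_perm r \<rho> \<circ> \<tau> \<circ> inv (block_perm r \<rho>) \<in> Young (comp_perm \<rho> r)"
  unfolding Young_def
proof (intro CollectI conjI allI impI)
  let ?\<pi> = "block_perm r \<rho>" and ?r = "comp_perm \<rho> r"
  have pp: "?\<pi> permutes {0..<sum_list r}" using block_perm_permutes[OF \<rho>] .
  show "?\<pi> \<circ> \<tau> \<circ> inv ?\<pi> permutes {0..<sum_list ?r}"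
    using sum_list_comp_perm[OF \<rho>] pp YoungD(1)[OF \<tau>] by (simp add: permutes_compose permutes_inv)
  fix i' assume "i' < length ?r"
  then have i'l: "i' < length r" by simp
  define i where "i = inv \<rho> i'"
  have ii: "\<rho> i = i'" unfolding i_def using permutes_inverses(1)[OF \<rho>] by simp
  have i: "i < length r" unfolding i_def using permutes_less[OF permutes_inv[OF \<rho>]] i'l by simp
  have B: "blk ?r i' = ?\<pi> ` blk r i" using block_perm_image[OF \<rho> i] ii by simp
  have "(?\<pi> \<circ> \<tau> \<circ> inv ?\<pi>) ` blk ?r i' = ?\<pi> ` (\<tau> ` (inv ?\<pi> ` (?\<pi> ` blk r i)))"
    unfolding B by (simp add: image_comp)
  also have "\<dots> = ?\<pi> ` (\<tau> ` blk r i)" using bij_inv_image_image[OF permutes_bij[OF pp]] by simp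
  also have "\<dots> = blk ?r i'" using YoungD(2)[OF \<tau> i] B by simp
  finally show "(?\<pi> \<circ> \<tau> \<circ> inv ?\<pi>) ` blk ?r i' = blk ?r i'" .
qed

lemma Young_conj_inv_block_perm:
  assumes \<rho>: "\<rho> permutes {0..<length r}" and \<tau>: "\<tau> \<in> Young (comp_perm \<rho> r)"
  shows "inv (block_perm r \<rho>) \<circ> \<tau> \<circ> block_perm r \<rho> \<in> Young r"
  unfolding Young_def
proof (intro CollectI conjI allI impI)
  let ?\<pi> = "block_perm r \<rho>" and ?r = "comp_perm \<rho> r"
  have pp: "?\<pi> permutes {0..<sum_list r}" using block_perm_permutes[OF \<rho>] .
  show "inv ?\<pi> \<circ> \<tau> \<circ> ?\<pi> permutes {0..<sum_list r}"
    using sum_list_comp_perm[OF \<rho>] pp YoungD(1)[OF \<tau>] by (simp add: permutes_compose permutes_inv)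
  fix i assume i: "i < length r"
  have B: "?\<pi> ` blk r i = blk ?r (\<rho> i)" using block_perm_image[OF \<rho> i] .
  have ri: "\<rho> i < length ?r" using permutes_less[OF \<rho> i] by simp
  have "(inv ?\<pi> \<circ> \<tau> \<circ> ?\<pi>) ` blk r i = inv ?\<pi> ` (\<tau> ` (?\<pi> ` blk r i))"
    by (simp add: image_comp)
  also have "\<dots> = inv ?\<pi> ` (?\<pi> ` blk r i)" unfolding B using YoungD(2)[OF \<tau> ri] by simp
  also have "\<dots> = blk r i" using bij_inv_image_image[OF permutes_bij[OF pp]] by simp
  finally show "(inv ?\<pi> \<circ> \<tau> \<circ> ?\<pi>) ` blk r i = blk r i" .
qed

lemma Young_comp_perm_conj:
  assumes \<rho>: "\<rho> permutes {0..<length r}"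
  shows "(\<lambda>h. inv (block_perm r \<rho>) \<circ> h \<circ> block_perm r \<rho>) ` Young (comp_perm \<rho> r) = Young r"
proof
  show "(\<lambda>h. inv (block_perm r \<rho>) \<circ> h \<circ> block_perm r \<rho>) ` Young (comp_perm \<rho> r) \<subseteq> Young r"
    using Young_conj_inv_block_perm[OF \<rho>] by auto
  show "Young r \<subseteq> (\<lambda>h. inv (block_perm r \<rho>) \<circ> h \<circ> block_perm r \<rho>) ` Young (comp_perm \<rho> r)"
  proof
    fix \<tau> assume \<tau>: "\<tau> \<in> Young r"
    have "bij (block_perm r \<rho>)" using permutes_bij[OF block_perm_permutes[OF \<rho>]] .
    then have "\<tau> = inv (block_perm r \<rho>) \<circ> (block_perm r \<rho> \<circ> \<tau> \<circ> inv (block_perm r \<rho>)) \<circ> block_perm r \<rho>"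
      by (simp add: fun_eq_iff bij_is_inj)
    then show "\<tau> \<in> (\<lambda>h. inv (block_perm r \<rho>) \<circ> h \<circ> block_perm r \<rho>) ` Young (comp_perm \<rho> r)"
      using Young_conj_block_perm[OF \<rho> \<tau>] by blast
  qed
qed

lemma right_translate_lcoset:
  "bij \<pi> \<Longrightarrow> (\<lambda>s. s \<circ> \<pi>) ` lcoset \<sigma> H = lcoset (\<sigma> \<circ> \<pi>) ((\<lambda>h. inv \<pi> \<circ> h \<circ> \<pi>) ` H)"
  unfolding lcoset_def image_image by (simp add: comp_def bij_is_surj surj_f_inv_f)

lemma bij_betw_right_translate_lcosets:
  assumes G: "perm_group G" and \<pi>: "\<pi> \<in> G"
  shows "bij_betw ((`) (\<lambda>s. s \<circ> \<pi>)) (lcosets G H) (lcosets G ((\<lambda>h. inv \<pi> \<circ> h \<circ> \<pi>) ` H))"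
proof (rule bij_betw_byWitness[where f' = "(`) (\<lambda>s. s \<circ> inv \<pi>)"])
  let ?H' = "(\<lambda>h. inv \<pi> \<circ> h \<circ> \<pi>) ` H"
  have bij: "bij \<pi>" using perm_groupD(4)[OF G \<pi>] .
  have inv_G: "inv \<pi> \<in> G" using perm_groupD(5)[OF G \<pi>] .
  have conj_inv: "(\<lambda>h. inv (inv \<pi>) \<circ> h \<circ> inv \<pi>) ` ?H' = H"
    using bij by (simp add: image_image comp_def bij_is_inj bij_is_surj surj_f_inv_f inv_inv_eq)
  show "\<forall>C\<in>lcosets G H. (\<lambda>s. s \<circ> inv \<pi>) ` (\<lambda>s. s \<circ> \<pi>) ` C = C"
    using bij by (simp add: image_image comp_def bij_is_surj surj_f_inv_f)
  show "\<forall>C\<in>lcosets G ?H'. (\<lambda>s. s \<circ> \<pi>) ` (\<lambda>s. s \<circ> inv \<pi>) ` C = C"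
    using bij by (simp add: image_image comp_def bij_is_inj)
  show "(`) (\<lambda>s. s \<circ> \<pi>) ` lcosets G H \<subseteq> lcosets G ?H'"
    using right_translate_lcoset[OF bij] perm_groupD(3)[OF G _ \<pi>] lcoset_in_lcosets
    unfolding lcosets_def by auto
  show "(`) (\<lambda>s. s \<circ> inv \<pi>) ` lcosets G ?H' \<subseteq> lcosets G H"
    using right_translate_lcoset[OF bij_imp_bij_inv[OF bij], of _ ?H'] conj_inv perm_groupD(3)[OF G _ inv_G]
    unfolding lcosets_def by fastforce
qed

context gamma_object begin

lemma beta_of_permute:
  fixes as :: "'a list"
  assumes x: "x \<in> Minv M act r" and l: "length as = length r" and \<rho>: "\<rho> permutes {0..<length r}"
  shows "beta_of act F x r as =
    beta_of act F (act (sum_list r) (block_perm r \<rho>) x) (comp_perm \<rho> r) (comp_perm \<rho> as)"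
proof -
  let ?\<pi> = "block_perm r \<rho>" and ?r = "comp_perm \<rho> r" and ?n = "sum_list r" and ?w = "rep_word r as"
  let ?G = "Sym (sum_list r)" and ?Y = "Young r" and ?Y' = "Young (comp_perm \<rho> r)"
  have sr: "sum_list ?r = ?n" using sum_list_comp_perm[OF \<rho>] by simp
  have \<pi>: "?\<pi> \<in> ?G" using block_perm_permutes[OF \<rho>] Sym_iff by simp
  have xM: "x \<in> M ?n" using Minv_in_M[OF x] by simp
  have Y'G: "?Y' \<subseteq> ?G" using Young_subset_Sym[of ?r] sr by simp
  have "beta_vec (act ?n ?\<pi> x) ?r (comp_perm \<rho> as) =
      coset_sum ?G ?Y' (\<lambda>\<sigma>. orbit_gen ?n \<sigma> (act ?n ?\<pi> x) (permute_list (inv ?\<pi>) ?w))"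
    unfolding beta_vec_def sr permute_list_block_perm[OF \<rho> l] ..
  also have "\<dots> = coset_sum ?G ?Y' (\<lambda>\<sigma>. orbit_gen ?n (\<sigma> \<circ> ?\<pi>) x ?w)"
    unfolding coset_sum_eq
  proof (rule sum.cong[OF refl])
    fix C assume "C \<in> lcosets ?G ?Y'"
    then have C: "coset_rep C \<in> ?G" by (rule coset_rep_in_group[OF perm_group_Sym perm_group_Young Y'G])
    show "orbit_gen ?n (coset_rep C) (act ?n ?\<pi> x) (permute_list (inv ?\<pi>) ?w) =
        orbit_gen ?n (coset_rep C \<circ> ?\<pi>) x ?w"
      using orbit_gen_comp[OF C \<pi> xM length_rep_word] unfolding orbit_gen_def by (rule sym)
  qed
  also have "\<dots> = coset_sum ?G ?Y (\<lambda>\<sigma>. orbit_gen ?n \<sigma> x ?w)"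
    using coset_rep_in[OF perm_group_Young]
    by (intro coset_sum_reindex[OF perm_group_Sym perm_group_Young Young_subset_Sym right_invariant_orbit_gen[OF x l]
        bij_betw_right_translate_lcosets[OF perm_group_Sym \<pi>, of ?Y', unfolded Young_comp_perm_conj[OF \<rho>]]])
      blast
  also have "\<dots> = beta_vec x r as" unfolding beta_vec_def ..
  finally show ?thesis unfolding beta_of_eq by simp
qed

end

context gamma_object begin

lemma beta_obj_beta_of: "beta_obj sM M act sA (beta_of act F)"
  unfolding beta_obj_def
  by (intro conjI allI impI vector_space_A beta_of_permute beta_of_Cons_0 beta_of_scale beta_of_rep_word
      beta_of_add beta_of_linear) assumption+

lemma beta_mor_beta_of:
  assumes g: "gamma_mor sM M act sA F sB F' g"
  shows "beta_mor sM M act sA (beta_of act F) sB (beta_of act F') g"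
  unfolding beta_mor_def
proof (intro conjI allI impI)
  show "Vector_Spaces.linear sA sB g" using g unfolding gamma_mor_def by simp
  fix r x and as :: "'a list"
  assume x: "x \<in> Minv M act r" and l: "length as = length r"
  have "F' (gamma_map g (beta_vec x r as)) = g (F (beta_vec x r as))"
    using g beta_vec_InvA[OF x l] unfolding gamma_mor_def by blast
  then show "g (beta_of act F x r as) = beta_of act F' x r (map g as)"
    unfolding beta_of_eq gamma_map_beta_vec[OF l] by simp
qed

end

lemma gamma_objectI: "sigma_module sM M act \<Longrightarrow> gamma_obj sM M act sA F \<Longrightarrow> gamma_object sM M act sA F"
  unfolding gamma_object_def gamma_space_def sigma_mod_def gamma_space_axioms_def gamma_object_axioms_def
    gamma_obj_def by blast

theorem proposition3p5:
  fixes sM :: "'k::field \<Rightarrow> 'm::ab_group_add \<Rightarrow> 'm"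
    and M :: "nat \<Rightarrow> 'm set"
    and act :: "nat \<Rightarrow> (nat \<Rightarrow> nat) \<Rightarrow> 'm \<Rightarrow> 'm"
  assumes "sigma_module sM M act"
  shows "(\<forall>(sA :: 'k \<Rightarrow> 'a::ab_group_add \<Rightarrow> 'a) F.
            gamma_obj sM M act sA F \<longrightarrow> beta_obj sM M act sA (beta_of act F))
       \<and> (\<forall>(sA :: 'k \<Rightarrow> 'a::ab_group_add \<Rightarrow> 'a) F (sB :: 'k \<Rightarrow> 'b::ab_group_add \<Rightarrow> 'b) F' g.
            gamma_obj sM M act sA F \<longrightarrow> gamma_obj sM M act sB F' \<longrightarrow>
            gamma_mor sM M act sA F sB F' g \<longrightarrow>
            beta_mor sM M act sA (beta_of act F) sB (beta_of act F') g)"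
  using gamma_object.beta_obj_beta_of gamma_object.beta_mor_beta_of gamma_objectI[OF assms] by blast

end
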